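(* Let $G$ be a permutation group, $K$ a smooth $G$-field and $n>0$ an integer. Put $k:=K^G$ and $\mu_n:=\{z\in K^\times:z^n=1\}$. Then there is a natural exact sequence $$H^1_{\mathrm{cont}}(G,\mu_n)\to{}_n\mathrm{Pic}_K(G)\to(K^\times/K^{\times n})^G/k^\times\to H^2_{\mathrm{cont}}(G,\mu_n).$$ Moreover, if $G$ has no proper open subgroups of finite index, then every invertible object $\mathcal L$ of $\mathrm{Sm}_K(G)$ of order $n$ in $\mathrm{Pic}_K(G)$ is contained in a $G$-field $K(a^{1/n})$ for some $a$ whose class in $K^\times/K^{\times n}$ is $G$-invariant.
   Context: A permutation group is a Hausdorff topological group admitting a base of open sets consisting of left and right translates of subgroups. A smooth $G$-field is a field with a $G$-action by automorphisms with open stabilizers of all elements. $\mathrm{Sm}_K(G)$ is the category of smooth left modules over the skew group ring $K\langle G\rangle$ ($(a[g])(b[h])=ab^g[gh]$), a tensor category under $\otimes_K$ with unit $K$. An object is invertible if it is one-dimensional over $K$; $\mathrm{Pic}_K(G)$ is the group of isomorphism classes of invertible objects under $\otimes_K$ (equal to $H^1_{\mathrm{cont}}(G,K^\times)$), and ${}_n\mathrm{Pic}_K(G)$ its $n$-torsion subgroup. $H^i_{\mathrm{cont}}$ is continuous cohomology with discrete coefficients; $\mu_n$ carries the restricted $G$-action. $k^\times$ maps to $(K^\times/K^{\times n})^G$ via inclusion. "$\mathcal L$ is contained in $K(a^{1/n})$" means $\mathcal L$ embeds $G$-equivariantly as a $K$-subspace of a $G$-field extension $K(a^{1/n})$. 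*)

theory Defs
  imports "HOL-Analysis.Product_Topology" "HOL-Analysis.T1_Spaces"
          "HOL-Algebra.Coset" "HOL-Algebra.Ring"
begin

definition perm_group :: "'g monoid \<Rightarrow> 'g topology \<Rightarrow> bool" where
  "perm_group G T \<longleftrightarrow>
     group G \<and> topspace T = carrier G \<and> Hausdorff_space T \<and>
     continuous_map (prod_topology T T) T (\<lambda>(x, y). x \<otimes>\<^bsub>G\<^esub> y) \<and>
     continuous_map T T (\<lambda>x. inv\<^bsub>G\<^esub> x) \<and>
     (\<forall>U. openin T U \<longrightarrow> (\<forall>x\<in>U. \<exists>H g V. subgroup H G \<and> g \<in> carrier G \<and>
        (V = g <#\<^bsub>G\<^esub> H \<or> V = H #>\<^bsub>G\<^esub> g) \<and> openin T V \<and> x \<in> V \<and> V \<subseteq> U))"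

definition smooth_G_field :: "'g monoid \<Rightarrow> 'g topology \<Rightarrow> ('g \<Rightarrow> 'k::field \<Rightarrow> 'k) \<Rightarrow> bool" where
  "smooth_G_field G T \<sigma> \<longleftrightarrow>
     (\<forall>g\<in>carrier G. bij (\<sigma> g) \<and> (\<forall>x y. \<sigma> g (x + y) = \<sigma> g x + \<sigma> g y \<and> \<sigma> g (x * y) = \<sigma> g x * \<sigma> g y)) \<and>
     (\<forall>x. \<sigma> \<one>\<^bsub>G\<^esub> x = x) \<and>
     (\<forall>g\<in>carrier G. \<forall>h\<in>carrier G. \<forall>x. \<sigma> (g \<otimes>\<^bsub>G\<^esub> h) x = \<sigma> g (\<sigma> h x)) \<and>
     (\<forall>x. openin T {g \<in> carrier G. \<sigma> g x = x})"

definition Kunits :: "'k::field set" where "Kunits = {x. x \<noteq> 0}"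

definition mu :: "nat \<Rightarrow> 'k::field set" where "mu n = {z. z \<noteq> 0 \<and> z ^ n = 1}"

definition fixed_field :: "'g monoid \<Rightarrow> ('g \<Rightarrow> 'k \<Rightarrow> 'k) \<Rightarrow> 'k set" where
  "fixed_field G \<sigma> = {x. \<forall>g\<in>carrier G. \<sigma> g x = x}"

definition cont1 :: "'g monoid \<Rightarrow> 'g topology \<Rightarrow> 'k set \<Rightarrow> ('g \<Rightarrow> 'k) \<Rightarrow> bool" where
  "cont1 G T A f \<longleftrightarrow> (\<forall>g\<in>carrier G. f g \<in> A) \<and> (\<forall>a. openin T {g \<in> carrier G. f g = a})"

definition cont2 :: "'g monoid \<Rightarrow> 'g topology \<Rightarrow> 'k set \<Rightarrow> ('g \<times> 'g \<Rightarrow> 'k) \<Rightarrow> bool" where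
  "cont2 G T A f \<longleftrightarrow> (\<forall>g\<in>carrier G. \<forall>h\<in>carrier G. f (g, h) \<in> A) \<and>
     (\<forall>a. openin (prod_topology T T) {p \<in> carrier G \<times> carrier G. f p = a})"

definition Z1 :: "'g monoid \<Rightarrow> 'g topology \<Rightarrow> ('g \<Rightarrow> 'k::field \<Rightarrow> 'k) \<Rightarrow> 'k set \<Rightarrow> ('g \<Rightarrow> 'k) set" where
  "Z1 G T \<sigma> A = {f. cont1 G T A f \<and>
     (\<forall>g\<in>carrier G. \<forall>h\<in>carrier G. f (g \<otimes>\<^bsub>G\<^esub> h) = f g * \<sigma> g (f h))}"

definition cls1 :: "'g monoid \<Rightarrow> 'g topology \<Rightarrow> ('g \<Rightarrow> 'k::field \<Rightarrow> 'k) \<Rightarrow> 'k set \<Rightarrow> ('g \<Rightarrow> 'k) \<Rightarrow> ('g \<Rightarrow> 'k) set" where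
  "cls1 G T \<sigma> A c = {f \<in> Z1 G T \<sigma> A. \<exists>a\<in>A. \<forall>g\<in>carrier G. f g = c g * (\<sigma> g a / a)}"

definition H1 :: "'g monoid \<Rightarrow> 'g topology \<Rightarrow> ('g \<Rightarrow> 'k::field \<Rightarrow> 'k) \<Rightarrow> 'k set \<Rightarrow> ('g \<Rightarrow> 'k) set set" where
  "H1 G T \<sigma> A = cls1 G T \<sigma> A ` Z1 G T \<sigma> A"

definition Z2 :: "'g monoid \<Rightarrow> 'g topology \<Rightarrow> ('g \<Rightarrow> 'k::field \<Rightarrow> 'k) \<Rightarrow> 'k set \<Rightarrow> ('g \<times> 'g \<Rightarrow> 'k) set" where
  "Z2 G T \<sigma> A = {f. cont2 G T A f \<and>
     (\<forall>g\<in>carrier G. \<forall>h\<in>carrier G. \<forall>l\<in>carrier G.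
        \<sigma> g (f (h, l)) * f (g, h \<otimes>\<^bsub>G\<^esub> l) = f (g \<otimes>\<^bsub>G\<^esub> h, l) * f (g, h))}"

definition cls2 :: "'g monoid \<Rightarrow> 'g topology \<Rightarrow> ('g \<Rightarrow> 'k::field \<Rightarrow> 'k) \<Rightarrow> 'k set \<Rightarrow> ('g \<times> 'g \<Rightarrow> 'k) \<Rightarrow> ('g \<times> 'g \<Rightarrow> 'k) set" where
  "cls2 G T \<sigma> A c = {f \<in> Z2 G T \<sigma> A. \<exists>d. cont1 G T A d \<and>
     (\<forall>g\<in>carrier G. \<forall>h\<in>carrier G. f (g, h) = c (g, h) * (d g * \<sigma> g (d h) / d (g \<otimes>\<^bsub>G\<^esub> h)))}"

definition H2 :: "'g monoid \<Rightarrow> 'g topology \<Rightarrow> ('g \<Rightarrow> 'k::field \<Rightarrow> 'k) \<Rightarrow> 'k set \<Rightarrow> ('g \<times> 'g \<Rightarrow> 'k) set set" where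
  "H2 G T \<sigma> A = cls2 G T \<sigma> A ` Z2 G T \<sigma> A"

definition pick :: "'a set \<Rightarrow> 'a" where "pick X = (SOME x. x \<in> X)"

definition mult1 where
  "mult1 G T \<sigma> A X Y = cls1 G T \<sigma> A (\<lambda>g. pick X g * pick Y g)"
definition mult2 where
  "mult2 G T \<sigma> A X Y = cls2 G T \<sigma> A (\<lambda>p. pick X p * pick Y p)"

definition Pic where "Pic G T \<sigma> = H1 G T \<sigma> Kunits"

definition pic_pow where
  "pic_pow G T \<sigma> X k = cls1 G T \<sigma> Kunits (\<lambda>g. pick X g ^ k)"

definition pic_one where "pic_one G T \<sigma> = cls1 G T \<sigma> Kunits (\<lambda>g. 1)"

definition nPic where
  "nPic G T \<sigma> n = {X \<in> Pic G T \<sigma>. pic_pow G T \<sigma> X n = pic_one G T \<sigma>}"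

section \<open>The group (K^x / K^x^n)^G / k^x\<close>

definition Ginv_mod :: "'g monoid \<Rightarrow> ('g \<Rightarrow> 'k::field \<Rightarrow> 'k) \<Rightarrow> nat \<Rightarrow> 'k \<Rightarrow> bool" where
  "Ginv_mod G \<sigma> n a \<longleftrightarrow> a \<noteq> 0 \<and> (\<forall>g\<in>carrier G. \<exists>e. e \<noteq> 0 \<and> \<sigma> g a = a * e ^ n)"

definition Mcls :: "'g monoid \<Rightarrow> ('g \<Rightarrow> 'k::field \<Rightarrow> 'k) \<Rightarrow> nat \<Rightarrow> 'k \<Rightarrow> 'k set" where
  "Mcls G \<sigma> n a = {a'. Ginv_mod G \<sigma> n a' \<and>
     (\<exists>z e. z \<in> fixed_field G \<sigma> \<and> z \<noteq> 0 \<and> e \<noteq> 0 \<and> a' = a * z * e ^ n)}"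

definition Mgrp where "Mgrp G \<sigma> n = Mcls G \<sigma> n ` {a. Ginv_mod G \<sigma> n a}"

definition Mmult where "Mmult G \<sigma> n X Y = Mcls G \<sigma> n (pick X * pick Y)"

definition phi1 where "phi1 G T \<sigma> X = cls1 G T \<sigma> Kunits (pick X)"

definition phi2 where
  "phi2 G T \<sigma> n X = Mcls G \<sigma> n
     (SOME b. b \<noteq> 0 \<and> (\<forall>g\<in>carrier G. pick X g ^ n = \<sigma> g b / b))"

definition phi3 where
  "phi3 G T \<sigma> n Y =
     (let a = pick Y;
          d = (SOME d. cont1 G T Kunits d \<and> (\<forall>g\<in>carrier G. \<sigma> g a = a * d g ^ n))
      in cls2 G T \<sigma> (mu n) (\<lambda>(g, h). d g * \<sigma> g (d h) / d (g \<otimes>\<^bsub>G\<^esub> h)))"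

text \<open>A smooth K<G>-module on the type 'm (scalar multiplication sc, G-action rho,
semilinear: rho g (c m) = sigma_g(c) rho g m), one-dimensional over K.\<close>
definition invertible_obj ::
  "'g monoid \<Rightarrow> 'g topology \<Rightarrow> ('g \<Rightarrow> 'k::field \<Rightarrow> 'k) \<Rightarrow> ('k \<Rightarrow> 'm::ab_group_add \<Rightarrow> 'm) \<Rightarrow> ('g \<Rightarrow> 'm \<Rightarrow> 'm) \<Rightarrow> bool" where
  "invertible_obj G T \<sigma> sc \<rho> \<longleftrightarrow>
     (\<forall>a b m. sc (a + b) m = sc a m + sc b m) \<and> (\<forall>a m m'. sc a (m + m') = sc a m + sc a m') \<and>
     (\<forall>a b m. sc (a * b) m = sc a (sc b m)) \<and> (\<forall>m. sc 1 m = m) \<and>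
     (\<exists>v. v \<noteq> 0 \<and> (\<forall>m. \<exists>a. m = sc a v)) \<and>
     (\<forall>g\<in>carrier G. \<forall>m m'. \<rho> g (m + m') = \<rho> g m + \<rho> g m') \<and>
     (\<forall>g\<in>carrier G. \<forall>a m. \<rho> g (sc a m) = sc (\<sigma> g a) (\<rho> g m)) \<and>
     (\<forall>m. \<rho> \<one>\<^bsub>G\<^esub> m = m) \<and>
     (\<forall>g\<in>carrier G. \<forall>h\<in>carrier G. \<forall>m. \<rho> (g \<otimes>\<^bsub>G\<^esub> h) m = \<rho> g (\<rho> h m)) \<and>
     (\<forall>m. openin T {g \<in> carrier G. \<rho> g m = m})"

definition pic_class where
  "pic_class G T \<sigma> sc \<rho> =
     (let v = (SOME v. v \<noteq> 0 \<and> (\<forall>m. \<exists>a. m = sc a v))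
      in cls1 G T \<sigma> Kunits (\<lambda>g. SOME c. \<rho> g v = sc c v))"

text \<open>The invertible object (sc, rho) is contained in a G-field extension K(a^(1/n)):
there is a field L (carrier represented inside 'k list), an embedding iota of K, alpha with
alpha^n = a generating L over K, a smooth G-action tau on L by field automorphisms extending
sigma, and an injective K-linear G-equivariant map j from the object into L.\<close>
definition contained_in_root_ext ::
  "'g monoid \<Rightarrow> 'g topology \<Rightarrow> ('g \<Rightarrow> 'k::field \<Rightarrow> 'k) \<Rightarrow> nat \<Rightarrow> 'k \<Rightarrow>
   ('k \<Rightarrow> 'm::ab_group_add \<Rightarrow> 'm) \<Rightarrow> ('g \<Rightarrow> 'm \<Rightarrow> 'm) \<Rightarrow> bool" where
  "contained_in_root_ext G T \<sigma> n a sc \<rho> \<longleftrightarrow>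
    (\<exists>(L :: 'k list ring) \<iota> \<alpha> \<tau> j.
       field L \<and>
       (\<forall>x. \<iota> x \<in> carrier L) \<and>
       (\<forall>x y. \<iota> (x + y) = \<iota> x \<oplus>\<^bsub>L\<^esub> \<iota> y \<and> \<iota> (x * y) = \<iota> x \<otimes>\<^bsub>L\<^esub> \<iota> y) \<and>
       \<iota> 1 = \<one>\<^bsub>L\<^esub> \<and>
       \<alpha> \<in> carrier L \<and> \<alpha> [^]\<^bsub>L\<^esub> n = \<iota> a \<and>
       (\<forall>x\<in>carrier L. \<exists>c. x = (\<Oplus>\<^bsub>L\<^esub>i\<in>{..<n}. \<iota> (c i) \<otimes>\<^bsub>L\<^esub> \<alpha> [^]\<^bsub>L\<^esub> i)) \<and>
       (\<forall>g\<in>carrier G. bij_betw (\<tau> g) (carrier L) (carrier L) \<and>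
          (\<forall>x\<in>carrier L. \<forall>y\<in>carrier L.
             \<tau> g (x \<oplus>\<^bsub>L\<^esub> y) = \<tau> g x \<oplus>\<^bsub>L\<^esub> \<tau> g y \<and> \<tau> g (x \<otimes>\<^bsub>L\<^esub> y) = \<tau> g x \<otimes>\<^bsub>L\<^esub> \<tau> g y) \<and>
          (\<forall>x. \<tau> g (\<iota> x) = \<iota> (\<sigma> g x))) \<and>
       (\<forall>x\<in>carrier L. \<tau> \<one>\<^bsub>G\<^esub> x = x) \<and>
       (\<forall>g\<in>carrier G. \<forall>h\<in>carrier G. \<forall>x\<in>carrier L. \<tau> (g \<otimes>\<^bsub>G\<^esub> h) x = \<tau> g (\<tau> h x)) \<and>
       (\<forall>x\<in>carrier L. openin T {g \<in> carrier G. \<tau> g x = x}) \<and>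
       inj j \<and> (\<forall>m. j m \<in> carrier L) \<and>
       (\<forall>m m'. j (m + m') = j m \<oplus>\<^bsub>L\<^esub> j m') \<and>
       (\<forall>c m. j (sc c m) = \<iota> c \<otimes>\<^bsub>L\<^esub> j m) \<and>
       (\<forall>g\<in>carrier G. \<forall>m. j (\<rho> g m) = \<tau> g (j m)))"

end

(* Exactness at each place amounts to correcting representatives by coboundaries.

   Let an invertible object have basis v with g v = c(g) v and c^n = \<delta>b. The twisted action
   p(X) \<mapsto> (\<sigma>_g p)(c(g) X) on K[X] multiplies X^n - b by c(g)^n, so it permutes the finitely many
   monic irreducible factors of X^n - b. The stabiliser of one factor q is an open subgroup of finite
   index, hence all of G. So G acts on the field K[X]/(q) = K(b^(1/n)), and v \<mapsto> X embeds the
   object equivariantly. *)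

theory Submission
  imports Defs "HOL-Algebra.Group_Action" "HOL-Computational_Algebra.Polynomial_Factorial"
begin

hide_const (open) Multiset.mult Multiset.mult1

section \<open>Locally constant maps\<close>

definition locally_constant :: "'a topology \<Rightarrow> ('a \<Rightarrow> 'b) \<Rightarrow> bool" where
  "locally_constant X f \<longleftrightarrow> (\<forall>y. openin X {x \<in> topspace X. f x = y})"

lemma locally_constant_iff_local:
  "locally_constant X f \<longleftrightarrow> (\<forall>x\<in>topspace X. \<exists>U. openin X U \<and> x \<in> U \<and> (\<forall>y\<in>U. f y = f x))"
proof (intro iffI ballI)
  fix x assume "locally_constant X f" and "x \<in> topspace X"
  then show "\<exists>U. openin X U \<and> x \<in> U \<and> (\<forall>y\<in>U. f y = f x)"
    unfolding locally_constant_def by (intro exI[of _ "{y \<in> topspace X. f y = f x}"]) auto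
next
  assume local: "\<forall>x\<in>topspace X. \<exists>U. openin X U \<and> x \<in> U \<and> (\<forall>y\<in>U. f y = f x)"
  show "locally_constant X f"
    unfolding locally_constant_def
  proof (intro allI, subst openin_subopen, intro ballI)
    fix c x assume x: "x \<in> {x \<in> topspace X. f x = c}"
    then obtain U where U: "openin X U" "x \<in> U" "\<forall>z\<in>U. f z = f x" using local by blast
    have "U \<subseteq> {x \<in> topspace X. f x = c}" using x U(3) openin_subset[OF U(1)] by blast
    then show "\<exists>U. openin X U \<and> x \<in> U \<and> U \<subseteq> {x \<in> topspace X. f x = c}" using U(1,2) by blast
  qed
qed

lemma locally_constant_const [simp]: "locally_constant X (\<lambda>x. c)"
  unfolding locally_constant_iff_local using openin_topspace by blast

lemma locally_constant_binop:
  assumes "locally_constant X f" and "locally_constant X f'"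
  shows "locally_constant X (\<lambda>x. F (f x) (f' x))"
  unfolding locally_constant_iff_local
proof
  fix x assume x: "x \<in> topspace X"
  obtain U where U: "openin X U" "x \<in> U" "\<forall>y\<in>U. f y = f x"
    using assms(1) x unfolding locally_constant_iff_local by blast
  obtain U' where U': "openin X U'" "x \<in> U'" "\<forall>y\<in>U'. f' y = f' x"
    using assms(2) x unfolding locally_constant_iff_local by blast
  show "\<exists>V. openin X V \<and> x \<in> V \<and> (\<forall>y\<in>V. F (f y) (f' y) = F (f x) (f' x))"
  proof (intro exI[of _ "U \<inter> U'"] conjI ballI)
    fix y assume "y \<in> U \<inter> U'"
    then have "f y = f x" "f' y = f' x" using U(3) U'(3) by blast+
    then show "F (f y) (f' y) = F (f x) (f' x)" by simp
  qed (use U U' in auto)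
qed

lemma locally_constant_comp: "locally_constant X f \<Longrightarrow> locally_constant X (\<lambda>x. F (f x))"
  using locally_constant_binop[of X f f "\<lambda>a b. F a"] by simp

lemma locally_constant_continuous_map_compose:
  assumes \<phi>: "continuous_map X Y \<phi>" and f: "locally_constant Y f"
  shows "locally_constant X (\<lambda>x. f (\<phi> x))"
  unfolding locally_constant_def
proof
  fix y
  have "openin X {x \<in> topspace X. \<phi> x \<in> {z \<in> topspace Y. f z = y}}"
    using openin_continuous_map_preimage[OF \<phi>] f unfolding locally_constant_def by blast
  moreover have "{x \<in> topspace X. \<phi> x \<in> {z \<in> topspace Y. f z = y}} = {x \<in> topspace X. f (\<phi> x) = y}"
    using continuous_map_image_subset_topspace[OF \<phi>] by auto
  ultimately show "openin X {x \<in> topspace X. f (\<phi> x) = y}" by simp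
qed

lemma locally_constant_map:
  assumes "\<And>x. locally_constant X (\<lambda>t. F t x)"
  shows "locally_constant X (\<lambda>t. map (F t) xs)"
proof (induction xs)
  case (Cons x xs)
  then show ?case using locally_constant_binop[OF assms[of x] Cons.IH, of Cons] by simp
qed simp

text \<open>By the orbit-stabiliser bijection, a finite orbit forces finite index.\<close>

lemma (in group) stabilizer_of_finite_orbit:
  assumes act_closed: "\<And>g y. g \<in> carrier G \<Longrightarrow> y \<in> E \<Longrightarrow> act g y \<in> E"
    and act_one: "\<And>y. y \<in> E \<Longrightarrow> act \<one> y = y"
    and act_mult: "\<And>g h y. g \<in> carrier G \<Longrightarrow> h \<in> carrier G \<Longrightarrow> y \<in> E \<Longrightarrow>
                     act (g \<otimes> h) y = act g (act h y)"
    and E: "finite E" and x: "x \<in> E"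
  shows "subgroup {g \<in> carrier G. act g x = x} G" and "finite (rcosets {g \<in> carrier G. act g x = x})"
proof -
  define \<phi> where "\<phi> g = (\<lambda>y\<in>E. act g y)" for g
  have bij: "\<phi> g \<in> Bij E" if g: "g \<in> carrier G" for g
    unfolding Bij_def \<phi>_def
  proof (intro IntI CollectI restrict_extensional bij_betw_byWitness[where f' = "act (inv g)"])
    show "\<forall>y\<in>E. act (inv g) (restrict (act g) E y) = y" "\<forall>y\<in>E. restrict (act g) E (act (inv g) y) = y"
      using g by (simp_all add: act_closed act_mult[symmetric] act_one)
  qed (use g act_closed in auto)
  have "group_action G E \<phi>"
  proof (unfold group_action_def group_hom_def group_hom_axioms_def, intro conjI)
    show "\<phi> \<in> hom G (BijGroup E)"
    proof (rule homI)
      fix g h assume g: "g \<in> carrier G" and h: "h \<in> carrier G"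
      show "\<phi> (g \<otimes> h) = \<phi> g \<otimes>\<^bsub>BijGroup E\<^esub> \<phi> h"
        using bij[OF g] bij[OF h] g h unfolding BijGroup_def
        by (auto simp: \<phi>_def compose_def act_closed act_mult)
    qed (simp add: BijGroup_def bij)
  qed (simp_all add: is_group group_BijGroup)
  then interpret group_action G E \<phi> .
  have stab: "stabilizer G \<phi> x = {g \<in> carrier G. act g x = x}"
    unfolding stabilizer_def \<phi>_def using x by simp
  then show "subgroup {g \<in> carrier G. act g x = x} G" using stabilizer_subgroup[OF x] by simp
  have "orbit G \<phi> x \<subseteq> E"
    using x unfolding orbit_def \<phi>_def by (auto simp: act_closed)
  then have "finite (orbit G \<phi> x)" using E by (rule finite_subset)
  then show "finite (rcosets {g \<in> carrier G. act g x = x})"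
    using orbit_stab_fun_is_bij[OF x] bij_betw_finite stab by metis
qed

lemma pick_in: "x \<in> X \<Longrightarrow> pick X \<in> X"
  unfolding pick_def by (rule someI)

section \<open>Polynomials over a field\<close>

definition make_monic :: "'k::field poly \<Rightarrow> 'k poly" where
  "make_monic p = smult (inverse (lead_coeff p)) p"

lemma lead_coeff_make_monic: "p \<noteq> 0 \<Longrightarrow> lead_coeff (make_monic p) = 1"
  unfolding make_monic_def by (simp add: lead_coeff_smult)

lemma make_monic_monic: "lead_coeff p = 1 \<Longrightarrow> make_monic p = p"
  unfolding make_monic_def by simp

lemma make_monic_smult: "a \<noteq> 0 \<Longrightarrow> make_monic (smult a p) = make_monic p"
  unfolding make_monic_def by (cases "p = 0") (simp_all add: lead_coeff_smult smult_smult field_simps)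

lemma smult_lead_coeff_make_monic: "smult (lead_coeff p) (make_monic p) = p"
  unfolding make_monic_def by (cases "p = 0") (simp_all add: smult_smult)

lemma make_monic_dvd_iff: "p \<noteq> 0 \<Longrightarrow> make_monic p dvd q \<longleftrightarrow> p dvd q"
  unfolding make_monic_def by (simp add: smult_dvd_iff)

lemma irreducible_make_monic: "irreducible p \<Longrightarrow> irreducible (make_monic p)"
proof -
  assume p: "irreducible p"
  then have "is_unit [:inverse (lead_coeff p):]" by (auto simp: is_unit_pCons_iff)
  then have "irreducible ([:inverse (lead_coeff p):] * p)" using p by (subst irreducible_mult_unit_left)
  then show ?thesis unfolding make_monic_def by simp
qed

lemma monic_associated_eq:
  fixes q m :: "'k::field poly"
  assumes q: "lead_coeff q = 1" and qm: "q dvd m" and mq: "m dvd q" and m: "m \<noteq> 0"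
  shows "q = make_monic m"
proof -
  obtain k where k: "m = q * k" using qm by (elim dvdE)
  have "q \<noteq> 0" "k \<noteq> 0" using k m by auto
  moreover have "degree m = degree q"
    using dvd_imp_degree_le[OF qm m] dvd_imp_degree_le[OF mq] \<open>q \<noteq> 0\<close> by simp
  ultimately have "degree k = 0" using k by (simp add: degree_mult_eq)
  then obtain a where "k = [:a:]" by (elim degree_eq_zeroE)
  then have "m = smult a q" "a \<noteq> 0" using k \<open>k \<noteq> 0\<close> by simp_all
  then have "make_monic m = make_monic q" by (simp add: make_monic_smult)
  then show ?thesis using make_monic_monic[OF q] by simp
qed

lemma prime_factorization_field_poly:
  fixes P :: "'k::field poly"
  assumes "P \<noteq> 0"
  obtains M where "prod_mset M = make_monic P" and "\<forall>m\<in>#M. prime_elem m"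
  using field_poly_prod_mset_prime_factorization[OF assms] field_poly_in_prime_factorization_imp_prime
  unfolding make_monic_def by blast

definition monic_irreducible_factors :: "'k::field poly \<Rightarrow> 'k poly set" where
  "monic_irreducible_factors P = {q. irreducible q \<and> lead_coeff q = 1 \<and> q dvd P}"

lemma finite_monic_irreducible_factors:
  fixes P :: "'k::field poly"
  assumes P: "P \<noteq> 0"
  shows "finite (monic_irreducible_factors P)"
proof -
  obtain M where M: "prod_mset M = make_monic P" and prime: "\<forall>m\<in>#M. prime_elem m"
    using P by (rule prime_factorization_field_poly)
  have "monic_irreducible_factors P \<subseteq> make_monic ` set_mset M"
  proof
    fix q assume "q \<in> monic_irreducible_factors P"
    then have q: "irreducible q" "lead_coeff q = 1" "q dvd P" unfolding monic_irreducible_factors_def by simp_all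
    have "q dvd prod_mset M" using q(3) P M by (simp add: make_monic_def dvd_smult)
    then obtain m where m: "m \<in># M" "q dvd m"
      using field_poly_irreducible_imp_prime[OF q(1)] by (elim prime_elem_dvd_prod_msetE)
    have "m dvd q \<or> is_unit q" using prime_elem_imp_irreducible[OF prime[rule_format, OF m(1)]] m(2) by (rule irreducibleD')
    then have "m dvd q" using irreducible_not_unit[OF q(1)] by blast
    then have "q = make_monic m" using q(2) m(2) prime[rule_format, OF m(1)] by (intro monic_associated_eq) auto
    then show "q \<in> make_monic ` set_mset M" using m(1) by blast
  qed
  then show ?thesis by (rule finite_subset) simp
qed

lemma monic_irreducible_factor_exists:
  fixes P :: "'k::field poly"
  assumes P: "0 < degree P"
  obtains q where "q \<in> monic_irreducible_factors P"
proof -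
  have "P \<noteq> 0" using P by auto
  then obtain M where M: "prod_mset M = make_monic P" and prime: "\<forall>m\<in>#M. prime_elem m"
    by (rule prime_factorization_field_poly)
  have "degree (make_monic P) = degree P" unfolding make_monic_def using \<open>P \<noteq> 0\<close> by simp
  then have "M \<noteq> {#}" using M P by auto
  then obtain m where m: "m \<in># M" by blast
  have "m dvd P" using dvd_prod_mset[OF m] M \<open>P \<noteq> 0\<close> by (simp add: make_monic_def dvd_smult_iff)
  moreover have "irreducible m" using prime_elem_imp_irreducible[OF prime[rule_format, OF m]] .
  moreover have "m \<noteq> 0" using \<open>irreducible m\<close> by auto
  ultimately have "make_monic m \<in> monic_irreducible_factors P"
    unfolding monic_irreducible_factors_def
    by (simp add: irreducible_make_monic lead_coeff_make_monic make_monic_dvd_iff)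
  then show ?thesis by (rule that)
qed

text \<open>Take a nonzero element of least degree in the ideal generated by q and p.\<close>

lemma irreducible_bezout:
  fixes q p :: "'k::field poly"
  assumes q: "irreducible q" and nd: "\<not> q dvd p"
  obtains u w where "u * q + w * p = 1"
proof -
  define I where "I = {r. r \<noteq> 0 \<and> (\<exists>u w. r = u * q + w * p)}"
  have "q \<in> I" unfolding I_def using q by (auto intro: exI[of _ 1] exI[of _ 0])
  then obtain r where r: "r \<in> I" and rmin: "\<And>s. s \<in> I \<Longrightarrow> degree r \<le> degree s"
    using ex_has_least_nat[of "\<lambda>s. s \<in> I" q degree] by blast
  obtain u0 w0 where r0: "r \<noteq> 0" "r = u0 * q + w0 * p" using r unfolding I_def by blast
  have r_dvd: "r dvd u * q + w * p" for u w
  proof (rule ccontr)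
    let ?s = "u * q + w * p"
    assume "\<not> r dvd ?s"
    then have nz: "?s mod r \<noteq> 0" by (simp add: dvd_eq_mod_eq_0)
    have "?s mod r = (u - (?s div r) * u0) * q + (w - (?s div r) * w0) * p"
      using r0(2) by (simp add: minus_div_mult_eq_mod[symmetric] algebra_simps)
    then have "?s mod r \<in> I" unfolding I_def using nz by blast
    then have "degree r \<le> degree (?s mod r)" by (rule rmin)
    moreover have "degree (?s mod r) < degree r" by (rule degree_mod_less'[OF r0(1) nz])
    ultimately show False by simp
  qed
  have "r dvd q" using r_dvd[of 1 0] by simp
  then have "q dvd r \<or> is_unit r" using q by (rule irreducibleD'[rotated])
  moreover have "\<not> q dvd r"
    using r_dvd[of 0 1] nd dvd_trans by auto
  ultimately obtain k where "1 = r * k" by (auto elim: dvdE)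
  then have "(k * u0) * q + (k * w0) * p = 1" using r0(2) by (simp add: algebra_simps)
  then show ?thesis by (rule that)
qed

text \<open>K[X]/(q), each class represented by the coefficient list of its remainder modulo q.\<close>

definition residue :: "'k::field poly \<Rightarrow> 'k poly \<Rightarrow> 'k list" where
  "residue q p = coeffs (p mod q)"

definition residue_ring :: "'k::field poly \<Rightarrow> 'k list ring" where
  "residue_ring q = \<lparr>carrier = range (residue q), mult = (\<lambda>x y. residue q (Poly x * Poly y)),
     one = residue q 1, zero = residue q 0, add = (\<lambda>x y. residue q (Poly x + Poly y))\<rparr>"

lemma Poly_residue [simp]: "Poly (residue q p) = p mod q"
  unfolding residue_def by simp

lemma residue_eq_iff: "residue q p = residue q p' \<longleftrightarrow> p mod q = p' mod q"
  unfolding residue_def using coeffs_eq_iff by metis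

lemma residue_in_carrier [simp]: "residue q p \<in> carrier (residue_ring q)"
  unfolding residue_ring_def by simp

lemma residue_add [simp]: "residue q p \<oplus>\<^bsub>residue_ring q\<^esub> residue q p' = residue q (p + p')"
  unfolding residue_ring_def by (simp add: residue_eq_iff mod_add_eq)

lemma residue_mult [simp]: "residue q p \<otimes>\<^bsub>residue_ring q\<^esub> residue q p' = residue q (p * p')"
  unfolding residue_ring_def by (simp add: residue_eq_iff mod_mult_eq)

lemma residue_ring_zero: "\<zero>\<^bsub>residue_ring q\<^esub> = residue q 0"
  unfolding residue_ring_def by simp

lemma residue_ring_one: "\<one>\<^bsub>residue_ring q\<^esub> = residue q 1"
  unfolding residue_ring_def by simp

lemma residue_ringE: "x \<in> carrier (residue_ring q) \<Longrightarrow> (\<And>p. x = residue q p \<Longrightarrow> R) \<Longrightarrow> R"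
  unfolding residue_ring_def by auto

lemma cring_residue_ring: "cring (residue_ring q)"
proof (rule cringI)
  show "abelian_group (residue_ring q)"
  proof (rule abelian_groupI)
    fix x assume "x \<in> carrier (residue_ring q)"
    then obtain p where p: "x = residue q p" by (rule residue_ringE)
    have "residue q (- p) \<oplus>\<^bsub>residue_ring q\<^esub> x = \<zero>\<^bsub>residue_ring q\<^esub>"
      unfolding p by (simp add: residue_ring_zero)
    then show "\<exists>y\<in>carrier (residue_ring q). y \<oplus>\<^bsub>residue_ring q\<^esub> x = \<zero>\<^bsub>residue_ring q\<^esub>" by auto
  qed (auto elim!: residue_ringE simp: residue_ring_zero ac_simps)
next
  show "comm_monoid (residue_ring q)"
    by (rule comm_monoidI) (auto elim!: residue_ringE simp: residue_ring_one ac_simps)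
qed (auto elim!: residue_ringE simp: distrib_right)

lemma field_residue_ring:
  assumes q: "irreducible q"
  shows "field (residue_ring q)"
proof -
  interpret cring "residue_ring q" by (rule cring_residue_ring)
  have "q \<noteq> 0" using q by auto
  then have "0 < degree q" using irreducible_not_unit[OF q] is_unit_iff_degree by blast
  then have one: "1 mod q = 1" by (intro mod_poly_less) simp
  show ?thesis
  proof (rule cring_fieldI2)
    show "\<zero>\<^bsub>residue_ring q\<^esub> \<noteq> \<one>\<^bsub>residue_ring q\<^esub>"
      unfolding residue_ring_zero residue_ring_one residue_eq_iff using one by simp
  next
    fix a assume a: "a \<in> carrier (residue_ring q)" "a \<noteq> \<zero>\<^bsub>residue_ring q\<^esub>"
    obtain p where p: "a = residue q p" using a(1) by (rule residue_ringE)
    have "\<not> q dvd p" using a(2) unfolding p residue_ring_zero residue_eq_iff by (simp add: dvd_eq_mod_eq_0)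
    then obtain u w where uw: "u * q + w * p = 1" by (rule irreducible_bezout[OF q])
    have "p * w mod q = 1 mod q"
      using uw by (metis mod_mult_self3 mult.commute)
    then have "a \<otimes>\<^bsub>residue_ring q\<^esub> residue q w = \<one>\<^bsub>residue_ring q\<^esub>"
      unfolding p residue_mult residue_ring_one residue_eq_iff .
    then show "\<exists>b\<in>carrier (residue_ring q). a \<otimes>\<^bsub>residue_ring q\<^esub> b = \<one>\<^bsub>residue_ring q\<^esub>" by auto
  qed
qed

lemma residue_pow: "residue q p [^]\<^bsub>residue_ring q\<^esub> (k :: nat) = residue q (p ^ k)"
  by (induction k) (simp_all add: residue_ring_one mult.commute)

lemma residue_finsum:
  "(\<Oplus>\<^bsub>residue_ring q\<^esub>i\<in>{..<k::nat}. residue q (f i)) = residue q (\<Sum>i<k. f i)"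
proof -
  interpret cring "residue_ring q" by (rule cring_residue_ring)
  show ?thesis
    by (induction k) (simp_all add: residue_ring_zero lessThan_Suc finsum_insert add.commute)
qed

section \<open>Continuous cohomology of a smooth G-field\<close>

locale smooth_field =
  fixes G :: "'g monoid" (structure) and T :: "'g topology" and \<sigma> :: "'g \<Rightarrow> 'k::field \<Rightarrow> 'k"
  assumes perm_group: "perm_group G T" and smooth: "smooth_G_field G T \<sigma>"
begin

sublocale group G
  using perm_group unfolding perm_group_def by simp

lemma topspace_T: "topspace T = carrier G"
  using perm_group unfolding perm_group_def by simp

lemma continuous_mult: "continuous_map (prod_topology T T) T (\<lambda>(x, y). x \<otimes> y)"
  using perm_group unfolding perm_group_def by simp

lemma sigma_add [simp]: "g \<in> carrier G \<Longrightarrow> \<sigma> g (x + y) = \<sigma> g x + \<sigma> g y"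
  using smooth unfolding smooth_G_field_def by blast

lemma sigma_mult [simp]: "g \<in> carrier G \<Longrightarrow> \<sigma> g (x * y) = \<sigma> g x * \<sigma> g y"
  using smooth unfolding smooth_G_field_def by blast

lemma sigma_bij: "g \<in> carrier G \<Longrightarrow> bij (\<sigma> g)"
  using smooth unfolding smooth_G_field_def by blast

lemma sigma_one [simp]: "\<sigma> \<one> x = x"
  using smooth unfolding smooth_G_field_def by blast

lemma sigma_comp: "g \<in> carrier G \<Longrightarrow> h \<in> carrier G \<Longrightarrow> \<sigma> (g \<otimes> h) x = \<sigma> g (\<sigma> h x)"
  using smooth unfolding smooth_G_field_def by blast

lemma stabilizer_open: "openin T {g \<in> carrier G. \<sigma> g x = x}"
  using smooth unfolding smooth_G_field_def by blast

lemma sigma_inj_iff: "g \<in> carrier G \<Longrightarrow> \<sigma> g x = \<sigma> g y \<longleftrightarrow> x = y"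
  using sigma_bij[of g] by (simp add: bij_def inj_eq)

lemma sigma_0 [simp]: "g \<in> carrier G \<Longrightarrow> \<sigma> g 0 = 0"
  using sigma_add[of g 0 0] by (metis add_cancel_right_right add_0)

lemma sigma_eq_0_iff [simp]: "g \<in> carrier G \<Longrightarrow> \<sigma> g x = 0 \<longleftrightarrow> x = 0"
  using sigma_inj_iff[of g x 0] by simp

lemma sigma_1 [simp]: "g \<in> carrier G \<Longrightarrow> \<sigma> g 1 = 1"
  using sigma_mult[of g 1 1] sigma_eq_0_iff[of g 1] by (metis mult_cancel_left1)

lemma sigma_inverse [simp]: "g \<in> carrier G \<Longrightarrow> \<sigma> g (inverse x) = inverse (\<sigma> g x)"
proof (cases "x = 0")
  case False
  assume g: "g \<in> carrier G"
  have "\<sigma> g (inverse x) * \<sigma> g x = 1" using sigma_mult[OF g, of "inverse x" x] False g by simp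
  then show ?thesis using False g by (simp add: field_simps)
qed simp

lemma sigma_divide [simp]: "g \<in> carrier G \<Longrightarrow> \<sigma> g (x / y) = \<sigma> g x / \<sigma> g y"
  by (simp add: divide_inverse)

lemma sigma_power [simp]: "g \<in> carrier G \<Longrightarrow> \<sigma> g (x ^ k) = \<sigma> g x ^ k"
  by (induction k) auto

lemma sigma_sum: "g \<in> carrier G \<Longrightarrow> \<sigma> g (sum f S) = (\<Sum>x\<in>S. \<sigma> g (f x))"
  by (induction S rule: infinite_finite_induct) simp_all

lemma continuous_left_translation: "a \<in> carrier G \<Longrightarrow> continuous_map T T (\<lambda>x. a \<otimes> x)"
  using continuous_map_compose[OF _ continuous_mult, of T "\<lambda>x. (a, x)"]
  by (simp add: o_def continuous_map_pairedI topspace_T)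

text \<open>The fibre through g0 is the translate of the stabiliser by g0.\<close>

lemma locally_constant_orbit_map:
  assumes comp: "\<And>g h. g \<in> carrier G \<Longrightarrow> h \<in> carrier G \<Longrightarrow> act (g \<otimes> h) x = act g (act h x)"
    and one: "act \<one> x = x" and stab: "openin T {g \<in> carrier G. act g x = x}"
  shows "locally_constant T (\<lambda>g. act g x)"
  unfolding locally_constant_iff_local topspace_T
proof
  fix g0 assume g0: "g0 \<in> carrier G"
  let ?U = "{g \<in> carrier G. inv g0 \<otimes> g \<in> {g \<in> carrier G. act g x = x}}"
  have "openin T ?U"
    using openin_continuous_map_preimage[OF continuous_left_translation stab, of "inv g0"] g0
    by (simp add: topspace_T)
  moreover have "act g x = act g0 x" if "g \<in> ?U" for g
  proof -
    from that have g: "g \<in> carrier G" and fixed: "act (inv g0 \<otimes> g) x = x" by auto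
    have "act g x = act (g0 \<otimes> (inv g0 \<otimes> g)) x" using g g0 by (simp add: m_assoc[symmetric])
    also have "\<dots> = act g0 x" using comp[of g0 "inv g0 \<otimes> g"] fixed g g0 by simp
    finally show ?thesis .
  qed
  moreover have "g0 \<in> ?U" using g0 by (simp add: one)
  ultimately show "\<exists>U. openin T U \<and> g0 \<in> U \<and> (\<forall>g\<in>U. act g x = act g0 x)" by blast
qed

lemma locally_constant_sigma: "locally_constant T (\<lambda>g. \<sigma> g x)"
  by (rule locally_constant_orbit_map[OF sigma_comp sigma_one stabilizer_open])

lemma cont1_iff: "cont1 G T A f \<longleftrightarrow> (\<forall>g\<in>carrier G. f g \<in> A) \<and> locally_constant T f"
  unfolding cont1_def locally_constant_def topspace_T ..

lemma cont2_iff: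
  "cont2 G T A f \<longleftrightarrow> (\<forall>g\<in>carrier G. \<forall>h\<in>carrier G. f (g, h) \<in> A) \<and> locally_constant (prod_topology T T) f"
  unfolding cont2_def locally_constant_def by (simp add: topspace_T)

lemma locally_constant_fst: "locally_constant T d \<Longrightarrow> locally_constant (prod_topology T T) (\<lambda>p. d (fst p))"
  by (rule locally_constant_continuous_map_compose[OF continuous_map_fst])

lemma locally_constant_product:
  "locally_constant T d \<Longrightarrow> locally_constant (prod_topology T T) (\<lambda>p. d (fst p \<otimes> snd p))"
  using locally_constant_continuous_map_compose[OF continuous_mult] by (simp add: case_prod_beta)

lemma locally_constant_sigma_snd:
  assumes d: "locally_constant T d"
  shows "locally_constant (prod_topology T T) (\<lambda>p. \<sigma> (fst p) (d (snd p)))"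
  unfolding locally_constant_iff_local
proof
  fix p assume "p \<in> topspace (prod_topology T T)"
  then have g0: "fst p \<in> carrier G" and h0: "snd p \<in> carrier G" by (auto simp: topspace_T)
  obtain V where V: "openin T V" "snd p \<in> V" "\<forall>h\<in>V. d h = d (snd p)"
    using d h0 unfolding locally_constant_iff_local topspace_T by blast
  obtain U where U: "openin T U" "fst p \<in> U" "\<forall>g\<in>U. \<sigma> g (d (snd p)) = \<sigma> (fst p) (d (snd p))"
    using locally_constant_sigma g0 unfolding locally_constant_iff_local topspace_T by blast
  have "\<sigma> (fst q) (d (snd q)) = \<sigma> (fst p) (d (snd p))" if "q \<in> U \<times> V" for q
  proof -
    from that have "d (snd q) = d (snd p)" "fst q \<in> U" using V(3) by auto
    then show ?thesis using U(3) by metis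
  qed
  moreover have "openin (prod_topology T T) (U \<times> V)" using U(1) V(1) by (simp add: openin_prod_Times_iff)
  moreover have "p \<in> U \<times> V" using U(2) V(2) by (simp add: mem_Times_iff)
  ultimately show "\<exists>W. openin (prod_topology T T) W \<and> p \<in> W \<and>
      (\<forall>q\<in>W. \<sigma> (fst q) (d (snd q)) = \<sigma> (fst p) (d (snd p)))" by blast
qed

definition coboundary2 :: "('g \<Rightarrow> 'k) \<Rightarrow> 'g \<times> 'g \<Rightarrow> 'k" where
  "coboundary2 d p = d (fst p) * \<sigma> (fst p) (d (snd p)) / d (fst p \<otimes> snd p)"

lemma coboundary2_apply: "coboundary2 d (g, h) = d g * \<sigma> g (d h) / d (g \<otimes> h)"
  unfolding coboundary2_def by simp

lemma locally_constant_coboundary2: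
  assumes "locally_constant T d"
  shows "locally_constant (prod_topology T T) (coboundary2 d)"
proof -
  have "locally_constant (prod_topology T T) (\<lambda>p. d (fst p) * \<sigma> (fst p) (d (snd p)))"
    using locally_constant_binop[OF locally_constant_fst[OF assms] locally_constant_sigma_snd[OF assms]] .
  from locally_constant_binop[OF this locally_constant_product[OF assms], of "(/)"]
  show ?thesis unfolding coboundary2_def .
qed

lemma coboundary2_cong:
  "(\<And>x. x \<in> carrier G \<Longrightarrow> d' x = d x) \<Longrightarrow> g \<in> carrier G \<Longrightarrow> h \<in> carrier G \<Longrightarrow>
   coboundary2 d' (g, h) = coboundary2 d (g, h)"
  unfolding coboundary2_def by simp

lemma coboundary2_mult:
  "g \<in> carrier G \<Longrightarrow> h \<in> carrier G \<Longrightarrow>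
   coboundary2 (\<lambda>x. d x * d' x) (g, h) = coboundary2 d (g, h) * coboundary2 d' (g, h)"
  unfolding coboundary2_def by simp

lemma coboundary2_inverse:
  "g \<in> carrier G \<Longrightarrow> h \<in> carrier G \<Longrightarrow>
   coboundary2 (\<lambda>x. inverse (d x)) (g, h) = inverse (coboundary2 d (g, h))"
  unfolding coboundary2_def by (simp add: field_simps)

lemma coboundary2_of_coboundary:
  "e \<noteq> 0 \<Longrightarrow> g \<in> carrier G \<Longrightarrow> h \<in> carrier G \<Longrightarrow> coboundary2 (\<lambda>x. \<sigma> x e / e) (g, h) = 1"
  unfolding coboundary2_def by (simp add: sigma_comp)

lemma coboundary2_one: "g \<in> carrier G \<Longrightarrow> coboundary2 (\<lambda>x. 1) (g, h) = 1"
  unfolding coboundary2_def by simp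

lemma Z1_values_into: "c \<in> Z1 G T \<sigma> A \<Longrightarrow> (\<And>g. g \<in> carrier G \<Longrightarrow> c g \<in> B) \<Longrightarrow> c \<in> Z1 G T \<sigma> B"
  unfolding Z1_def cont1_def by auto

lemma Z2_values_into:
  "c \<in> Z2 G T \<sigma> A \<Longrightarrow> (\<And>g h. g \<in> carrier G \<Longrightarrow> h \<in> carrier G \<Longrightarrow> c (g, h) \<in> B) \<Longrightarrow> c \<in> Z2 G T \<sigma> B"
  unfolding Z2_def cont2_def by auto

end

locale coeff_group = smooth_field +
  fixes A
  assumes one_in_A: "1 \<in> A" and zero_notin_A: "0 \<notin> A"
    and mult_in_A: "x \<in> A \<Longrightarrow> y \<in> A \<Longrightarrow> x * y \<in> A"
    and inverse_in_A: "x \<in> A \<Longrightarrow> inverse x \<in> A"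
    and sigma_in_A: "g \<in> carrier G \<Longrightarrow> x \<in> A \<Longrightarrow> \<sigma> g x \<in> A"
begin

lemma nonzero_if_in_A: "x \<in> A \<Longrightarrow> x \<noteq> 0"
  using zero_notin_A by blast

lemma divide_in_A: "x \<in> A \<Longrightarrow> y \<in> A \<Longrightarrow> x / y \<in> A"
  by (simp add: divide_inverse mult_in_A inverse_in_A)

lemma Z1_iff: "c \<in> Z1 G T \<sigma> A \<longleftrightarrow> (\<forall>g\<in>carrier G. c g \<in> A) \<and> locally_constant T c \<and>
   (\<forall>g\<in>carrier G. \<forall>h\<in>carrier G. c (g \<otimes> h) = c g * \<sigma> g (c h))"
  unfolding Z1_def cont1_iff by simp

lemma
  assumes "c \<in> Z1 G T \<sigma> A"
  shows Z1_in_A: "g \<in> carrier G \<Longrightarrow> c g \<in> A"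
    and Z1_nonzero: "g \<in> carrier G \<Longrightarrow> c g \<noteq> 0"
    and Z1_locally_constant: "locally_constant T c"
    and Z1_cocycle: "g \<in> carrier G \<Longrightarrow> h \<in> carrier G \<Longrightarrow> c (g \<otimes> h) = c g * \<sigma> g (c h)"
  using assms nonzero_if_in_A unfolding Z1_iff by blast+

lemma Z1_mult: "c \<in> Z1 G T \<sigma> A \<Longrightarrow> c' \<in> Z1 G T \<sigma> A \<Longrightarrow> (\<lambda>g. c g * c' g) \<in> Z1 G T \<sigma> A"
  unfolding Z1_iff by (auto simp: mult_in_A locally_constant_binop)

lemma Z1_one: "(\<lambda>g. 1) \<in> Z1 G T \<sigma> A"
  unfolding Z1_iff by (simp add: one_in_A)

lemma Z1_power: "c \<in> Z1 G T \<sigma> A \<Longrightarrow> (\<lambda>g. c g ^ k) \<in> Z1 G T \<sigma> A"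
  by (induction k) (simp_all add: Z1_one Z1_mult)

lemma Z1_coboundary: "a \<in> A \<Longrightarrow> (\<lambda>g. \<sigma> g a / a) \<in> Z1 G T \<sigma> A"
  unfolding Z1_iff using nonzero_if_in_A[of a] locally_constant_comp[OF locally_constant_sigma, of "\<lambda>x. x / a" a]
  by (auto simp: divide_in_A sigma_in_A sigma_comp)

definition cohomologous1 where
  "cohomologous1 c f \<longleftrightarrow> (\<exists>a\<in>A. \<forall>g\<in>carrier G. f g = c g * (\<sigma> g a / a))"

lemma cls1_eq_Collect: "cls1 G T \<sigma> A c = {f \<in> Z1 G T \<sigma> A. cohomologous1 c f}"
  unfolding cls1_def cohomologous1_def ..

lemma cohomologous1_refl: "cohomologous1 c c"
  unfolding cohomologous1_def using one_in_A by (intro bexI[of _ 1]) auto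

lemma cohomologous1_sym: "cohomologous1 c f \<Longrightarrow> cohomologous1 f c"
  unfolding cohomologous1_def
proof (elim bexE)
  fix a assume a: "a \<in> A" and f: "\<forall>g\<in>carrier G. f g = c g * (\<sigma> g a / a)"
  have "c g = f g * (\<sigma> g (inverse a) / inverse a)" if g: "g \<in> carrier G" for g
    using f g nonzero_if_in_A[OF a] by (simp add: field_simps)
  then show "\<exists>a\<in>A. \<forall>g\<in>carrier G. c g = f g * (\<sigma> g a / a)"
    using inverse_in_A[OF a] by blast
qed

lemma cohomologous1_mult:
  "cohomologous1 c f \<Longrightarrow> cohomologous1 c' f' \<Longrightarrow> cohomologous1 (\<lambda>g. c g * c' g) (\<lambda>g. f g * f' g)"
  unfolding cohomologous1_def
proof (elim bexE)
  fix a b assume a: "a \<in> A" and f: "\<forall>g\<in>carrier G. f g = c g * (\<sigma> g a / a)"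
    and b: "b \<in> A" and f': "\<forall>g\<in>carrier G. f' g = c' g * (\<sigma> g b / b)"
  have "f g * f' g = c g * c' g * (\<sigma> g (a * b) / (a * b))" if g: "g \<in> carrier G" for g
    using f f' g by simp
  then show "\<exists>a\<in>A. \<forall>g\<in>carrier G. f g * f' g = c g * c' g * (\<sigma> g a / a)"
    using mult_in_A[OF a b] by blast
qed

lemma cohomologous1_trans: "cohomologous1 c f \<Longrightarrow> cohomologous1 f f' \<Longrightarrow> cohomologous1 c f'"
  unfolding cohomologous1_def
proof (elim bexE)
  fix a b assume a: "a \<in> A" and f: "\<forall>g\<in>carrier G. f g = c g * (\<sigma> g a / a)"
    and b: "b \<in> A" and f': "\<forall>g\<in>carrier G. f' g = f g * (\<sigma> g b / b)"
  have "f' g = c g * (\<sigma> g (a * b) / (a * b))" if g: "g \<in> carrier G" for g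
    using f f' g by simp
  then show "\<exists>a\<in>A. \<forall>g\<in>carrier G. f' g = c g * (\<sigma> g a / a)"
    using mult_in_A[OF a b] by blast
qed

lemma cls1_self: "c \<in> Z1 G T \<sigma> A \<Longrightarrow> c \<in> cls1 G T \<sigma> A c"
  unfolding cls1_eq_Collect using cohomologous1_refl by simp

lemma cls1_eq: "cohomologous1 c c' \<Longrightarrow> cls1 G T \<sigma> A c = cls1 G T \<sigma> A c'"
  unfolding cls1_eq_Collect using cohomologous1_sym cohomologous1_trans by blast

lemma cls1_eq_iff: "c' \<in> Z1 G T \<sigma> A \<Longrightarrow> cls1 G T \<sigma> A c = cls1 G T \<sigma> A c' \<longleftrightarrow> cohomologous1 c c'"
  using cls1_self[of c'] cls1_eq[of c c'] unfolding cls1_eq_Collect by blast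

lemma pick_cls1: "c \<in> Z1 G T \<sigma> A \<Longrightarrow> pick (cls1 G T \<sigma> A c) \<in> Z1 G T \<sigma> A \<and> cohomologous1 c (pick (cls1 G T \<sigma> A c))"
  using pick_in[OF cls1_self, of c] unfolding cls1_eq_Collect by blast

lemma H1_pick: "X \<in> H1 G T \<sigma> A \<Longrightarrow> pick X \<in> Z1 G T \<sigma> A \<and> X = cls1 G T \<sigma> A (pick X)"
  unfolding H1_def using pick_cls1 cls1_eq by blast

lemma cls1_in_H1: "c \<in> Z1 G T \<sigma> A \<Longrightarrow> cls1 G T \<sigma> A c \<in> H1 G T \<sigma> A"
  unfolding H1_def by blast

lemma coboundary2_in_A:
  "(\<And>x. x \<in> carrier G \<Longrightarrow> d x \<in> A) \<Longrightarrow> g \<in> carrier G \<Longrightarrow> h \<in> carrier G \<Longrightarrow> coboundary2 d (g, h) \<in> A"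
  unfolding coboundary2_apply by (simp add: divide_in_A mult_in_A sigma_in_A)

lemma coboundary2_of_cocycle: "d \<in> Z1 G T \<sigma> A \<Longrightarrow> g \<in> carrier G \<Longrightarrow> h \<in> carrier G \<Longrightarrow> coboundary2 d (g, h) = 1"
  unfolding coboundary2_apply using Z1_cocycle[of d g h] Z1_nonzero[of d "g \<otimes> h"] by simp

lemma Z2_iff: "c \<in> Z2 G T \<sigma> A \<longleftrightarrow> (\<forall>g\<in>carrier G. \<forall>h\<in>carrier G. c (g, h) \<in> A) \<and>
   locally_constant (prod_topology T T) c \<and>
   (\<forall>g\<in>carrier G. \<forall>h\<in>carrier G. \<forall>l\<in>carrier G. \<sigma> g (c (h, l)) * c (g, h \<otimes> l) = c (g \<otimes> h, l) * c (g, h))"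
  unfolding Z2_def cont2_iff by simp

lemma Z2_coboundary2:
  assumes d: "\<And>x. x \<in> carrier G \<Longrightarrow> d x \<in> A" and lc: "locally_constant T d"
  shows "coboundary2 d \<in> Z2 G T \<sigma> A"
  unfolding Z2_iff
proof (intro conjI ballI)
  show "locally_constant (prod_topology T T) (coboundary2 d)" by (rule locally_constant_coboundary2[OF lc])
  fix g h assume g: "g \<in> carrier G" and h: "h \<in> carrier G"
  show "coboundary2 d (g, h) \<in> A" by (rule coboundary2_in_A[OF d g h])
  fix l assume l: "l \<in> carrier G"
  have "d (h \<otimes> l) \<noteq> 0" "d (g \<otimes> h) \<noteq> 0" "d (g \<otimes> h \<otimes> l) \<noteq> 0"
    using d nonzero_if_in_A g h l by simp_all
  then show "\<sigma> g (coboundary2 d (h, l)) * coboundary2 d (g, h \<otimes> l) = coboundary2 d (g \<otimes> h, l) * coboundary2 d (g, h)"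
    unfolding coboundary2_apply using g h l by (simp add: sigma_comp m_assoc field_simps)
qed

lemma Z2_one: "(\<lambda>p. 1) \<in> Z2 G T \<sigma> A"
  unfolding Z2_iff by (simp add: one_in_A)

definition cohomologous2 where
  "cohomologous2 c f \<longleftrightarrow>
     (\<exists>d. cont1 G T A d \<and> (\<forall>g\<in>carrier G. \<forall>h\<in>carrier G. f (g, h) = c (g, h) * coboundary2 d (g, h)))"

lemma cls2_eq_Collect: "cls2 G T \<sigma> A c = {f \<in> Z2 G T \<sigma> A. cohomologous2 c f}"
  unfolding cls2_def cohomologous2_def coboundary2_apply ..

lemma cohomologous2_refl: "cohomologous2 c c"
  unfolding cohomologous2_def
  by (rule exI[of _ "\<lambda>x. 1"]) (simp add: cont1_iff one_in_A coboundary2_one)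

lemma cohomologous2_sym: "cohomologous2 c f \<Longrightarrow> cohomologous2 f c"
  unfolding cohomologous2_def cont1_iff
proof (elim exE conjE)
  fix d assume dA: "\<forall>g\<in>carrier G. d g \<in> A" and lc: "locally_constant T d"
    and f: "\<forall>g\<in>carrier G. \<forall>h\<in>carrier G. f (g, h) = c (g, h) * coboundary2 d (g, h)"
  have "c (g, h) = f (g, h) * coboundary2 (\<lambda>x. inverse (d x)) (g, h)"
    if g: "g \<in> carrier G" and h: "h \<in> carrier G" for g h
  proof -
    have "coboundary2 d (g, h) \<noteq> 0" using coboundary2_in_A[of d g h] dA g h nonzero_if_in_A by blast
    then show ?thesis using f g h by (simp add: coboundary2_inverse)
  qed
  then show "\<exists>d. ((\<forall>g\<in>carrier G. d g \<in> A) \<and> locally_constant T d) \<and>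
      (\<forall>g\<in>carrier G. \<forall>h\<in>carrier G. c (g, h) = f (g, h) * coboundary2 d (g, h))"
    using dA inverse_in_A locally_constant_comp[OF lc, of inverse]
    by (intro exI[of _ "\<lambda>x. inverse (d x)"]) simp
qed

lemma cohomologous2_mult:
  "cohomologous2 c f \<Longrightarrow> cohomologous2 c' f' \<Longrightarrow> cohomologous2 (\<lambda>p. c p * c' p) (\<lambda>p. f p * f' p)"
  unfolding cohomologous2_def cont1_iff
proof (elim exE conjE)
  fix d d' assume dA: "\<forall>g\<in>carrier G. d g \<in> A" and lc: "locally_constant T d"
    and f: "\<forall>g\<in>carrier G. \<forall>h\<in>carrier G. f (g, h) = c (g, h) * coboundary2 d (g, h)"
    and dA': "\<forall>g\<in>carrier G. d' g \<in> A" and lc': "locally_constant T d'"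
    and f': "\<forall>g\<in>carrier G. \<forall>h\<in>carrier G. f' (g, h) = c' (g, h) * coboundary2 d' (g, h)"
  have "f (g, h) * f' (g, h) = c (g, h) * c' (g, h) * coboundary2 (\<lambda>x. d x * d' x) (g, h)"
    if g: "g \<in> carrier G" and h: "h \<in> carrier G" for g h
    using f f' g h by (simp add: coboundary2_mult ac_simps)
  then show "\<exists>d. ((\<forall>g\<in>carrier G. d g \<in> A) \<and> locally_constant T d) \<and>
      (\<forall>g\<in>carrier G. \<forall>h\<in>carrier G. f (g, h) * f' (g, h) = c (g, h) * c' (g, h) * coboundary2 d (g, h))"
    using dA dA' mult_in_A locally_constant_binop[OF lc lc', of "(*)"]
    by (intro exI[of _ "\<lambda>x. d x * d' x"]) simp
qed

lemma cohomologous2_cong: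
  "cohomologous2 c f \<Longrightarrow> (\<And>g h. g \<in> carrier G \<Longrightarrow> h \<in> carrier G \<Longrightarrow> c' (g, h) = c (g, h)) \<Longrightarrow>
   (\<And>g h. g \<in> carrier G \<Longrightarrow> h \<in> carrier G \<Longrightarrow> f' (g, h) = f (g, h)) \<Longrightarrow> cohomologous2 c' f'"
  unfolding cohomologous2_def by auto

lemma cohomologous2_trans: "cohomologous2 c f \<Longrightarrow> cohomologous2 f f' \<Longrightarrow> cohomologous2 c f'"
  unfolding cohomologous2_def cont1_iff
proof (elim exE conjE)
  fix d d' assume dA: "\<forall>g\<in>carrier G. d g \<in> A" and lc: "locally_constant T d"
    and f: "\<forall>g\<in>carrier G. \<forall>h\<in>carrier G. f (g, h) = c (g, h) * coboundary2 d (g, h)"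
    and dA': "\<forall>g\<in>carrier G. d' g \<in> A" and lc': "locally_constant T d'"
    and f': "\<forall>g\<in>carrier G. \<forall>h\<in>carrier G. f' (g, h) = f (g, h) * coboundary2 d' (g, h)"
  have "f' (g, h) = c (g, h) * coboundary2 (\<lambda>x. d x * d' x) (g, h)"
    if g: "g \<in> carrier G" and h: "h \<in> carrier G" for g h
    using f f' g h by (simp add: coboundary2_mult ac_simps)
  then show "\<exists>d. ((\<forall>g\<in>carrier G. d g \<in> A) \<and> locally_constant T d) \<and>
      (\<forall>g\<in>carrier G. \<forall>h\<in>carrier G. f' (g, h) = c (g, h) * coboundary2 d (g, h))"
    using dA dA' mult_in_A locally_constant_binop[OF lc lc', of "(*)"]
    by (intro exI[of _ "\<lambda>x. d x * d' x"]) simp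
qed

lemma cls2_self: "c \<in> Z2 G T \<sigma> A \<Longrightarrow> c \<in> cls2 G T \<sigma> A c"
  unfolding cls2_eq_Collect using cohomologous2_refl by simp

lemma cls2_eq: "cohomologous2 c c' \<Longrightarrow> cls2 G T \<sigma> A c = cls2 G T \<sigma> A c'"
  unfolding cls2_eq_Collect using cohomologous2_sym cohomologous2_trans by blast

lemma cls2_eq_iff: "c' \<in> Z2 G T \<sigma> A \<Longrightarrow> cls2 G T \<sigma> A c = cls2 G T \<sigma> A c' \<longleftrightarrow> cohomologous2 c c'"
  using cls2_self[of c'] cls2_eq[of c c'] unfolding cls2_eq_Collect by blast

lemma pick_cls2: "c \<in> Z2 G T \<sigma> A \<Longrightarrow> pick (cls2 G T \<sigma> A c) \<in> Z2 G T \<sigma> A \<and> cohomologous2 c (pick (cls2 G T \<sigma> A c))"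
  using pick_in[OF cls2_self, of c] unfolding cls2_eq_Collect by blast

lemma mult1_cls1:
  assumes "c \<in> Z1 G T \<sigma> A" and "c' \<in> Z1 G T \<sigma> A"
  shows "mult1 G T \<sigma> A (cls1 G T \<sigma> A c) (cls1 G T \<sigma> A c') = cls1 G T \<sigma> A (\<lambda>g. c g * c' g)"
proof -
  have "cohomologous1 (\<lambda>g. c g * c' g) (\<lambda>g. pick (cls1 G T \<sigma> A c) g * pick (cls1 G T \<sigma> A c') g)"
    using pick_cls1[OF assms(1)] pick_cls1[OF assms(2)] by (intro cohomologous1_mult) simp_all
  then show ?thesis unfolding Defs.mult1_def by (rule cls1_eq[OF cohomologous1_sym])
qed

lemma cls2_cong:
  assumes "\<And>g h. g \<in> carrier G \<Longrightarrow> h \<in> carrier G \<Longrightarrow> c' (g, h) = c (g, h)"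
  shows "cls2 G T \<sigma> A c' = cls2 G T \<sigma> A c"
proof -
  have "cohomologous2 c' c" using cohomologous2_cong[OF cohomologous2_refl[of c], of c' c] assms by blast
  then show ?thesis by (rule cls2_eq)
qed

lemma mult2_cls2:
  assumes "c \<in> Z2 G T \<sigma> A" and "c' \<in> Z2 G T \<sigma> A"
  shows "mult2 G T \<sigma> A (cls2 G T \<sigma> A c) (cls2 G T \<sigma> A c') = cls2 G T \<sigma> A (\<lambda>p. c p * c' p)"
proof -
  have "cohomologous2 (\<lambda>p. c p * c' p) (\<lambda>p. pick (cls2 G T \<sigma> A c) p * pick (cls2 G T \<sigma> A c') p)"
    using pick_cls2[OF assms(1)] pick_cls2[OF assms(2)] by (intro cohomologous2_mult) simp_all
  then show ?thesis unfolding mult2_def by (rule cls2_eq[OF cohomologous2_sym])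
qed

end

sublocale smooth_field \<subseteq> units: coeff_group G T \<sigma> Kunits
  by unfold_locales (auto simp: Kunits_def)

lemma Kunits_iff [simp]: "x \<in> Kunits \<longleftrightarrow> x \<noteq> 0"
  unfolding Kunits_def by simp

lemma mu_iff: "x \<in> mu n \<longleftrightarrow> x \<noteq> 0 \<and> x ^ n = 1"
  unfolding mu_def by simp

section \<open>The Kummer sequence\<close>

locale kummer = smooth_field +
  fixes n :: nat
begin

sublocale roots: coeff_group G T \<sigma> "mu n"
  by unfold_locales (auto simp: mu_iff power_mult_distrib power_inverse sigma_power[symmetric])

lemma Z1_roots_imp_units: "c \<in> Z1 G T \<sigma> (mu n) \<Longrightarrow> c \<in> Z1 G T \<sigma> Kunits"
  using Z1_values_into roots.Z1_nonzero by simp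

lemma cohomologous1_roots_imp_units: "roots.cohomologous1 c f \<Longrightarrow> units.cohomologous1 c f"
  unfolding roots.cohomologous1_def units.cohomologous1_def by (auto simp: mu_iff)

lemma fixed_field_iff: "z \<in> fixed_field G \<sigma> \<longleftrightarrow> (\<forall>g\<in>carrier G. \<sigma> g z = z)"
  unfolding fixed_field_def by simp

text \<open>a and a' have the same class in (K^x / K^x^n) / k^x.\<close>

definition kummer_rel where
  "kummer_rel a a' \<longleftrightarrow> (\<exists>z e. z \<in> fixed_field G \<sigma> \<and> z \<noteq> 0 \<and> e \<noteq> 0 \<and> a' = a * z * e ^ n)"

lemma kummer_relI: "z \<in> fixed_field G \<sigma> \<Longrightarrow> z \<noteq> 0 \<Longrightarrow> e \<noteq> 0 \<Longrightarrow> a' = a * z * e ^ n \<Longrightarrow> kummer_rel a a'"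
  unfolding kummer_rel_def by blast

lemma kummer_relE:
  assumes "kummer_rel a a'"
  obtains z e where "z \<in> fixed_field G \<sigma>" "z \<noteq> 0" "e \<noteq> 0" "a' = a * z * e ^ n"
  using assms unfolding kummer_rel_def by blast

lemma Mcls_eq_Collect: "Mcls G \<sigma> n a = {a'. Ginv_mod G \<sigma> n a' \<and> kummer_rel a a'}"
  unfolding Mcls_def kummer_rel_def ..

lemma kummer_rel_refl: "kummer_rel a a"
  by (rule kummer_relI[of 1 1]) (simp_all add: fixed_field_iff)

lemma kummer_rel_sym:
  assumes a: "a \<noteq> 0" and "kummer_rel a a'"
  shows "kummer_rel a' a"
proof -
  obtain z e where z: "z \<in> fixed_field G \<sigma>" "z \<noteq> 0" and e: "e \<noteq> 0" and a': "a' = a * z * e ^ n"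
    using assms(2) by (rule kummer_relE)
  show ?thesis
    by (rule kummer_relI[of "inverse z" "inverse e"]) (use a z e a' in \<open>auto simp: fixed_field_iff field_simps power_inverse\<close>)
qed

lemma kummer_rel_mult:
  assumes "kummer_rel a a'" and "kummer_rel b b'"
  shows "kummer_rel (a * b) (a' * b')"
proof -
  obtain z e where z: "z \<in> fixed_field G \<sigma>" "z \<noteq> 0" and e: "e \<noteq> 0" and a': "a' = a * z * e ^ n"
    using assms(1) by (rule kummer_relE)
  obtain z' e' where z': "z' \<in> fixed_field G \<sigma>" "z' \<noteq> 0" and e': "e' \<noteq> 0" and b': "b' = b * z' * e' ^ n"
    using assms(2) by (rule kummer_relE)
  show ?thesis
    by (rule kummer_relI[of "z * z'" "e * e'"]) (use z e a' z' e' b' in \<open>auto simp: fixed_field_iff power_mult_distrib\<close>)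
qed

lemma kummer_rel_trans:
  assumes "kummer_rel a a'" and "kummer_rel a' a''"
  shows "kummer_rel a a''"
proof -
  obtain z e where z: "z \<in> fixed_field G \<sigma>" "z \<noteq> 0" and e: "e \<noteq> 0" and a': "a' = a * z * e ^ n"
    using assms(1) by (rule kummer_relE)
  obtain z' e' where z': "z' \<in> fixed_field G \<sigma>" "z' \<noteq> 0" and e': "e' \<noteq> 0" and a'': "a'' = a' * z' * e' ^ n"
    using assms(2) by (rule kummer_relE)
  show ?thesis
    by (rule kummer_relI[of "z * z'" "e * e'"]) (use z e a' z' e' a'' in \<open>auto simp: fixed_field_iff power_mult_distrib\<close>)
qed

lemma Ginv_mod_nonzero: "Ginv_mod G \<sigma> n a \<Longrightarrow> a \<noteq> 0"
  unfolding Ginv_mod_def by simp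

lemma Ginv_mod_one: "Ginv_mod G \<sigma> n 1"
  unfolding Ginv_mod_def by (auto intro: exI[of _ 1])

lemma Ginv_mod_mult: "Ginv_mod G \<sigma> n a \<Longrightarrow> Ginv_mod G \<sigma> n b \<Longrightarrow> Ginv_mod G \<sigma> n (a * b)"
  unfolding Ginv_mod_def
proof (elim conjE, intro conjI ballI)
  fix g assume "\<forall>g\<in>carrier G. \<exists>e. e \<noteq> 0 \<and> \<sigma> g a = a * e ^ n"
    and "\<forall>g\<in>carrier G. \<exists>e. e \<noteq> 0 \<and> \<sigma> g b = b * e ^ n" and g: "g \<in> carrier G"
  then obtain e e' where "e \<noteq> 0" "\<sigma> g a = a * e ^ n" "e' \<noteq> 0" "\<sigma> g b = b * e' ^ n" by blast
  then show "\<exists>e. e \<noteq> 0 \<and> \<sigma> g (a * b) = a * b * e ^ n"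
    using g by (intro exI[of _ "e * e'"]) (auto simp: power_mult_distrib)
qed simp

lemma Mcls_self: "Ginv_mod G \<sigma> n a \<Longrightarrow> a \<in> Mcls G \<sigma> n a"
  unfolding Mcls_eq_Collect using kummer_rel_refl by simp

lemma Mcls_eq: "Ginv_mod G \<sigma> n a \<Longrightarrow> kummer_rel a a' \<Longrightarrow> Mcls G \<sigma> n a = Mcls G \<sigma> n a'"
  unfolding Mcls_eq_Collect
  using kummer_rel_sym[OF Ginv_mod_nonzero] kummer_rel_trans by blast

lemma Mcls_eq_iff:
  "Ginv_mod G \<sigma> n a \<Longrightarrow> Ginv_mod G \<sigma> n a' \<Longrightarrow> Mcls G \<sigma> n a = Mcls G \<sigma> n a' \<longleftrightarrow> kummer_rel a a'"
  using Mcls_self[of a'] Mcls_eq[of a a'] unfolding Mcls_eq_Collect by blast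

lemma pick_Mcls: "Ginv_mod G \<sigma> n a \<Longrightarrow> Ginv_mod G \<sigma> n (pick (Mcls G \<sigma> n a)) \<and> kummer_rel a (pick (Mcls G \<sigma> n a))"
  using pick_in[OF Mcls_self, of a] unfolding Mcls_eq_Collect by blast

lemma Mgrp_pick: "Y \<in> Mgrp G \<sigma> n \<Longrightarrow> Ginv_mod G \<sigma> n (pick Y) \<and> Y = Mcls G \<sigma> n (pick Y)"
  unfolding Mgrp_def using pick_Mcls Mcls_eq by blast

lemma Mcls_in_Mgrp: "Ginv_mod G \<sigma> n a \<Longrightarrow> Mcls G \<sigma> n a \<in> Mgrp G \<sigma> n"
  unfolding Mgrp_def by blast

definition kummer_witness where
  "kummer_witness c b \<longleftrightarrow> b \<noteq> 0 \<and> (\<forall>g\<in>carrier G. \<sigma> g b = b * c g ^ n)"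

lemma kummer_witness_iff: "kummer_witness c b \<longleftrightarrow> b \<noteq> 0 \<and> (\<forall>g\<in>carrier G. c g ^ n = \<sigma> g b / b)"
  unfolding kummer_witness_def by (auto simp: field_simps)

lemma kummer_witness_mult:
  "kummer_witness c b \<Longrightarrow> kummer_witness c' b' \<Longrightarrow> kummer_witness (\<lambda>g. c g * c' g) (b * b')"
  unfolding kummer_witness_def by (simp add: power_mult_distrib ac_simps)

lemma kummer_witness_coboundary: "u \<noteq> 0 \<Longrightarrow> kummer_witness (\<lambda>g. \<sigma> g u / u) (u ^ n)"
  unfolding kummer_witness_def by (simp add: power_divide)

lemma kummer_witness_fixed: "z \<in> fixed_field G \<sigma> \<Longrightarrow> z \<noteq> 0 \<Longrightarrow> kummer_witness (\<lambda>g. 1) z"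
  unfolding kummer_witness_def fixed_field_iff by simp

lemma kummer_witness_cong:
  "kummer_witness c b \<Longrightarrow> (\<And>g. g \<in> carrier G \<Longrightarrow> c' g = c g) \<Longrightarrow> kummer_witness c' b"
  unfolding kummer_witness_def by simp

lemma kummer_witness_ratio:
  assumes "kummer_witness c b" and "kummer_witness c' b" and g: "g \<in> carrier G" and "c g \<noteq> 0" and "c' g \<noteq> 0"
  shows "c' g / c g \<in> mu n"
  using assms unfolding kummer_witness_def mu_iff by (simp add: power_divide)

lemma kummer_witness_cohomologous:
  assumes "units.cohomologous1 c c'" and "kummer_witness c b"
  shows "\<exists>b'. kummer_witness c' b'"
proof -
  obtain u where u: "u \<noteq> 0" "\<forall>g\<in>carrier G. c' g = c g * (\<sigma> g u / u)"
    using assms(1) unfolding units.cohomologous1_def by auto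
  from kummer_witness_mult[OF assms(2) kummer_witness_coboundary[OF u(1)]]
  show ?thesis using kummer_witness_cong u(2) by blast
qed

lemma Ginv_mod_if_kummer_witness:
  "c \<in> Z1 G T \<sigma> Kunits \<Longrightarrow> kummer_witness c b \<Longrightarrow> Ginv_mod G \<sigma> n b"
  unfolding kummer_witness_def Ginv_mod_def using units.Z1_nonzero by blast

lemma kummer_rel_if_same_witness:
  assumes b: "kummer_witness c b" and b': "kummer_witness c b'"
  shows "kummer_rel b b'"
proof (rule kummer_relI[of "b' / b" 1])
  have nz: "b \<noteq> 0" "b' \<noteq> 0" using b b' unfolding kummer_witness_def by simp_all
  show "b' / b \<in> fixed_field G \<sigma>"
    unfolding fixed_field_iff
  proof
    fix g assume g: "g \<in> carrier G"
    have "\<sigma> g b = b * c g ^ n" "\<sigma> g b' = b' * c g ^ n" using b b' g unfolding kummer_witness_def by simp_all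
    moreover have "c g ^ n \<noteq> 0" using \<open>\<sigma> g b = b * c g ^ n\<close> nz g by (metis mult_zero_right sigma_eq_0_iff)
    ultimately show "\<sigma> g (b' / b) = b' / b" using g by simp
  qed
qed (use b b' in \<open>simp_all add: kummer_witness_def\<close>)

lemma kummer_rel_if_kummer_witnesses:
  assumes b: "kummer_witness c b" and b': "kummer_witness c' b'" and c: "units.cohomologous1 c c'"
  shows "kummer_rel b b'"
proof -
  obtain u where u: "u \<noteq> 0" "\<forall>g\<in>carrier G. c' g = c g * (\<sigma> g u / u)"
    using c unfolding units.cohomologous1_def by auto
  have "kummer_rel b (b * u ^ n)" by (rule kummer_relI[of 1 u]) (simp_all add: fixed_field_iff u)
  moreover have "kummer_witness c' (b * u ^ n)"
    using kummer_witness_mult[OF b kummer_witness_coboundary[OF u(1)]] kummer_witness_cong u(2) by blast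
  then have "kummer_rel (b * u ^ n) b'" using b' by (rule kummer_rel_if_same_witness)
  ultimately show ?thesis by (rule kummer_rel_trans)
qed

lemma Pic_pick: "X \<in> Pic G T \<sigma> \<Longrightarrow> pick X \<in> Z1 G T \<sigma> Kunits \<and> X = cls1 G T \<sigma> Kunits (pick X)"
  unfolding Pic_def by (rule units.H1_pick)

lemma nPic_iff: "X \<in> nPic G T \<sigma> n \<longleftrightarrow> X \<in> Pic G T \<sigma> \<and> (\<exists>b. kummer_witness (pick X) b)"
proof (cases "X \<in> Pic G T \<sigma>")
  case True
  then have X: "pick X \<in> Z1 G T \<sigma> Kunits" by (simp add: Pic_pick)
  have "X \<in> nPic G T \<sigma> n \<longleftrightarrow> cls1 G T \<sigma> Kunits (\<lambda>g. pick X g ^ n) = cls1 G T \<sigma> Kunits (\<lambda>g. 1)"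
    unfolding nPic_def pic_pow_def pic_one_def using True by simp
  also have "\<dots> \<longleftrightarrow> units.cohomologous1 (\<lambda>g. 1) (\<lambda>g. pick X g ^ n)"
    using units.cls1_eq_iff[OF units.Z1_power[OF X], of "\<lambda>g. 1"] by (simp add: eq_commute)
  also have "\<dots> \<longleftrightarrow> (\<exists>b. kummer_witness (pick X) b)"
    unfolding units.cohomologous1_def kummer_witness_iff by auto
  finally show ?thesis using True by simp
qed (simp add: nPic_def)

lemma phi2_eq:
  assumes "kummer_witness (pick X) b"
  obtains b' where "phi2 G T \<sigma> n X = Mcls G \<sigma> n b'" and "kummer_witness (pick X) b'"
proof -
  have eq: "(\<lambda>b. b \<noteq> 0 \<and> (\<forall>g\<in>carrier G. pick X g ^ n = \<sigma> g b / b)) = kummer_witness (pick X)"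
    unfolding kummer_witness_iff ..
  show ?thesis
    using that someI[of "kummer_witness (pick X)", OF assms] unfolding phi2_def eq by blast
qed

definition root_cochain where
  "root_cochain a = (SOME d. cont1 G T Kunits d \<and> (\<forall>g\<in>carrier G. \<sigma> g a = a * d g ^ n))"

lemma root_cochain:
  assumes a: "Ginv_mod G \<sigma> n a"
  shows "cont1 G T Kunits (root_cochain a) \<and> kummer_witness (root_cochain a) a"
proof -
  define root where "root g = (SOME e. e \<noteq> 0 \<and> \<sigma> g a = a * e ^ n)" for g
  have root: "root g \<noteq> 0 \<and> \<sigma> g a = a * root g ^ n" if "g \<in> carrier G" for g
    using a that someI_ex[of "\<lambda>e. e \<noteq> 0 \<and> \<sigma> g a = a * e ^ n"] unfolding Ginv_mod_def root_def by blast
  text \<open>The chosen root depends on g only through the locally constant value of \<sigma> g a.\<close>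
  have "locally_constant T root"
    unfolding root_def by (rule locally_constant_comp[OF locally_constant_sigma])
  then have "cont1 G T Kunits root \<and> (\<forall>g\<in>carrier G. \<sigma> g a = a * root g ^ n)"
    unfolding cont1_iff using root by simp
  then have "\<exists>d. cont1 G T Kunits d \<and> (\<forall>g\<in>carrier G. \<sigma> g a = a * d g ^ n)" by blast
  from someI_ex[OF this]
  have "cont1 G T Kunits (root_cochain a) \<and> (\<forall>g\<in>carrier G. \<sigma> g a = a * root_cochain a g ^ n)"
    unfolding root_cochain_def .
  then show ?thesis using Ginv_mod_nonzero[OF a] unfolding kummer_witness_def by simp
qed

lemma phi3_eq: "phi3 G T \<sigma> n Y = cls2 G T \<sigma> (mu n) (coboundary2 (root_cochain (pick Y)))"
proof -
  have "(\<lambda>(g, h). root_cochain (pick Y) g * \<sigma> g (root_cochain (pick Y) h) / root_cochain (pick Y) (g \<otimes> h))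
        = coboundary2 (root_cochain (pick Y))"
    by (rule ext) (simp add: coboundary2_def case_prod_beta)
  then show ?thesis unfolding phi3_def Let_def root_cochain_def by simp
qed

lemma coboundary2_root_in_Z2:
  assumes d: "cont1 G T Kunits d" and w: "kummer_witness d a"
  shows "coboundary2 d \<in> Z2 G T \<sigma> (mu n)"
proof (rule Z2_values_into)
  show "coboundary2 d \<in> Z2 G T \<sigma> Kunits"
    using d unfolding cont1_iff by (intro units.Z2_coboundary2) auto
  fix g h assume g: "g \<in> carrier G" and h: "h \<in> carrier G"
  have nz: "\<And>x. x \<in> carrier G \<Longrightarrow> d x \<noteq> 0" using d unfolding cont1_iff by simp
  have dn: "\<And>x. x \<in> carrier G \<Longrightarrow> d x ^ n = \<sigma> x a / a" using w unfolding kummer_witness_iff by simp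
  have a: "a \<noteq> 0" using w unfolding kummer_witness_def by simp
  have "coboundary2 d (g, h) ^ n = d g ^ n * \<sigma> g (d h ^ n) / d (g \<otimes> h) ^ n"
    unfolding coboundary2_apply using g h by (simp add: power_mult_distrib power_divide)
  also have "\<dots> = (\<sigma> g a / a) * \<sigma> g (\<sigma> h a / a) / (\<sigma> (g \<otimes> h) a / a)"
    using dn g h by simp
  also have "\<dots> = 1" using g h a by (simp add: sigma_comp)
  finally show "coboundary2 d (g, h) \<in> mu n"
    unfolding mu_iff coboundary2_apply using nz g h by simp
qed

text \<open>If a' = a z f^n with z in k, then d times the coboundary of f is a second root cochain of a',
  so it differs from d' by a mu_n-valued cochain eps.\<close>

lemma cohomologous2_if_kummer_rel:
  assumes d: "cont1 G T Kunits d" and w: "kummer_witness d a"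
    and d': "cont1 G T Kunits d'" and w': "kummer_witness d' a'"
    and r: "kummer_rel a a'"
  shows "roots.cohomologous2 (coboundary2 d) (coboundary2 d')"
proof -
  obtain z f where z: "z \<in> fixed_field G \<sigma>" "z \<noteq> 0" and f: "f \<noteq> 0" and a': "a' = a * z * f ^ n"
    using r by (rule kummer_relE)
  have nz: "\<And>g. g \<in> carrier G \<Longrightarrow> d g \<noteq> 0" and lc: "locally_constant T d"
    using d unfolding cont1_iff by auto
  have nz': "\<And>g. g \<in> carrier G \<Longrightarrow> d' g \<noteq> 0" and lc': "locally_constant T d'"
    using d' unfolding cont1_iff by auto
  have "kummer_witness (\<lambda>g. d g * (\<sigma> g f / f) * 1) (a * f ^ n * z)"
    by (intro kummer_witness_mult kummer_witness_coboundary kummer_witness_fixed w f z)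
  then have e: "kummer_witness (\<lambda>g. d g * (\<sigma> g f / f)) a'" unfolding a' by (simp add: ac_simps)
  define eps where "eps g = d' g / (d g * (\<sigma> g f / f))" for g
  have eps_mu: "eps g \<in> mu n" if g: "g \<in> carrier G" for g
    unfolding eps_def using kummer_witness_ratio[OF e w' g] nz[OF g] nz'[OF g] f g by simp
  have "locally_constant T (\<lambda>g. d g * (\<sigma> g f / f))"
    using locally_constant_binop[OF lc locally_constant_sigma, of "\<lambda>x y. x * (y / f)"] by simp
  then have "locally_constant T eps"
    unfolding eps_def using locally_constant_binop[OF lc', of _ "(/)"] by blast
  then have eps: "cont1 G T (mu n) eps" unfolding cont1_iff using eps_mu by simp
  show ?thesis
    unfolding roots.cohomologous2_def
  proof (intro exI[of _ eps] conjI ballI eps)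
    fix g h assume g: "g \<in> carrier G" and h: "h \<in> carrier G"
    have dd: "d' x = d x * (\<sigma> x f / f) * eps x" if "x \<in> carrier G" for x
      unfolding eps_def using nz that f by simp
    have "coboundary2 d' (g, h) = coboundary2 (\<lambda>x. d x * (\<sigma> x f / f) * eps x) (g, h)"
      by (rule coboundary2_cong[OF dd g h])
    also have "\<dots> = coboundary2 d (g, h) * coboundary2 (\<lambda>x. \<sigma> x f / f) (g, h) * coboundary2 eps (g, h)"
      using g h by (simp only: coboundary2_mult)
    also have "\<dots> = coboundary2 d (g, h) * coboundary2 eps (g, h)"
      using coboundary2_of_coboundary[OF f g h] by simp
    finally show "coboundary2 d' (g, h) = coboundary2 d (g, h) * coboundary2 eps (g, h)" .
  qed
qed

lemma Mmult_Mcls: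
  assumes "Ginv_mod G \<sigma> n a" and "Ginv_mod G \<sigma> n b"
  shows "Mmult G \<sigma> n (Mcls G \<sigma> n a) (Mcls G \<sigma> n b) = Mcls G \<sigma> n (a * b)"
proof -
  have "kummer_rel (a * b) (pick (Mcls G \<sigma> n a) * pick (Mcls G \<sigma> n b))"
    using pick_Mcls[OF assms(1)] pick_Mcls[OF assms(2)] by (intro kummer_rel_mult) simp_all
  then show ?thesis
    unfolding Mmult_def using Mcls_eq Ginv_mod_mult[OF assms] by simp
qed

lemma phi1_cls1: "phi1 G T \<sigma> (cls1 G T \<sigma> (mu n) c) = cls1 G T \<sigma> Kunits c" if "c \<in> Z1 G T \<sigma> (mu n)"
  unfolding phi1_def
  using units.cls1_eq[OF cohomologous1_roots_imp_units[OF roots.cohomologous1_sym]] roots.pick_cls1[OF that]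
  by simp

lemma phi2_cls1:
  assumes c: "c \<in> Z1 G T \<sigma> Kunits" and b: "kummer_witness c b"
  shows "phi2 G T \<sigma> n (cls1 G T \<sigma> Kunits c) = Mcls G \<sigma> n b"
proof -
  let ?X = "cls1 G T \<sigma> Kunits c"
  have r: "units.cohomologous1 c (pick ?X)" using units.pick_cls1[OF c] by simp
  obtain b' where "kummer_witness (pick ?X) b'" using kummer_witness_cohomologous[OF r b] by blast
  then obtain b'' where phi2: "phi2 G T \<sigma> n ?X = Mcls G \<sigma> n b''" and b'': "kummer_witness (pick ?X) b''"
    by (rule phi2_eq)
  have "kummer_rel b b''" by (rule kummer_rel_if_kummer_witnesses[OF b b'' r])
  then show ?thesis using phi2 Mcls_eq[OF Ginv_mod_if_kummer_witness[OF c b]] by simp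
qed

lemma phi3_Mcls:
  assumes a: "Ginv_mod G \<sigma> n a" and d: "cont1 G T Kunits d" and w: "kummer_witness d a"
  shows "phi3 G T \<sigma> n (Mcls G \<sigma> n a) = cls2 G T \<sigma> (mu n) (coboundary2 d)"
proof -
  let ?a = "pick (Mcls G \<sigma> n a)"
  have a': "Ginv_mod G \<sigma> n ?a" and r: "kummer_rel a ?a" using pick_Mcls[OF a] by simp_all
  have "roots.cohomologous2 (coboundary2 d) (coboundary2 (root_cochain ?a))"
    using root_cochain[OF a'] by (intro cohomologous2_if_kummer_rel[OF d w _ _ r]) simp_all
  then show ?thesis unfolding phi3_eq by (rule roots.cls2_eq[symmetric])
qed

lemma nPic_cls1E:
  assumes "X \<in> nPic G T \<sigma> n"
  obtains c b where "c \<in> Z1 G T \<sigma> Kunits" "X = cls1 G T \<sigma> Kunits c" "kummer_witness c b"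
  using assms Pic_pick unfolding nPic_iff by blast

lemma Mgrp_MclsE:
  assumes "Y \<in> Mgrp G \<sigma> n"
  obtains a where "Ginv_mod G \<sigma> n a" "Y = Mcls G \<sigma> n a"
    "cont1 G T Kunits (root_cochain a)" "kummer_witness (root_cochain a) a"
  using assms Mgrp_pick root_cochain by blast

lemma cls1_in_nPic:
  "c \<in> Z1 G T \<sigma> Kunits \<Longrightarrow> kummer_witness c b \<Longrightarrow> cls1 G T \<sigma> Kunits c \<in> nPic G T \<sigma> n"
  unfolding nPic_iff Pic_def
  using units.cls1_in_H1 units.pick_cls1 kummer_witness_cohomologous by blast

lemma phi1_in_nPic: "X \<in> H1 G T \<sigma> (mu n) \<Longrightarrow> phi1 G T \<sigma> X \<in> nPic G T \<sigma> n"
proof -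
  assume "X \<in> H1 G T \<sigma> (mu n)"
  then have c: "pick X \<in> Z1 G T \<sigma> (mu n)" and X: "X = cls1 G T \<sigma> (mu n) (pick X)"
    using roots.H1_pick by blast+
  have "kummer_witness (pick X) 1"
    using roots.Z1_in_A[OF c] unfolding kummer_witness_def mu_iff by simp
  then have "cls1 G T \<sigma> Kunits (pick X) \<in> nPic G T \<sigma> n"
    by (rule cls1_in_nPic[OF Z1_roots_imp_units[OF c]])
  then show ?thesis using phi1_cls1[OF c] X by simp
qed

lemma phi2_in_Mgrp: "X \<in> nPic G T \<sigma> n \<Longrightarrow> phi2 G T \<sigma> n X \<in> Mgrp G \<sigma> n"
  by (elim nPic_cls1E) (simp add: phi2_cls1 Mcls_in_Mgrp Ginv_mod_if_kummer_witness)

lemma phi3_in_H2: "Y \<in> Mgrp G \<sigma> n \<Longrightarrow> phi3 G T \<sigma> n Y \<in> H2 G T \<sigma> (mu n)"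
  by (elim Mgrp_MclsE) (simp add: phi3_Mcls H2_def coboundary2_root_in_Z2)

lemma phi1_mult:
  assumes "X \<in> H1 G T \<sigma> (mu n)" and "Y \<in> H1 G T \<sigma> (mu n)"
  shows "phi1 G T \<sigma> (mult1 G T \<sigma> (mu n) X Y) = mult1 G T \<sigma> Kunits (phi1 G T \<sigma> X) (phi1 G T \<sigma> Y)"
proof -
  obtain x y where x: "x \<in> Z1 G T \<sigma> (mu n)" "X = cls1 G T \<sigma> (mu n) x"
    and y: "y \<in> Z1 G T \<sigma> (mu n)" "Y = cls1 G T \<sigma> (mu n) y"
    using assms roots.H1_pick by blast
  show ?thesis
    using x y by (simp add: roots.mult1_cls1 units.mult1_cls1 phi1_cls1 roots.Z1_mult Z1_roots_imp_units)
qed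

lemma phi2_mult:
  assumes "X \<in> nPic G T \<sigma> n" and "Y \<in> nPic G T \<sigma> n"
  shows "phi2 G T \<sigma> n (mult1 G T \<sigma> Kunits X Y) = Mmult G \<sigma> n (phi2 G T \<sigma> n X) (phi2 G T \<sigma> n Y)"
proof -
  obtain x b where x: "x \<in> Z1 G T \<sigma> Kunits" "X = cls1 G T \<sigma> Kunits x" "kummer_witness x b"
    using assms(1) by (rule nPic_cls1E)
  obtain y b' where y: "y \<in> Z1 G T \<sigma> Kunits" "Y = cls1 G T \<sigma> Kunits y" "kummer_witness y b'"
    using assms(2) by (rule nPic_cls1E)
  show ?thesis
    using x y by (simp add: units.mult1_cls1 units.Z1_mult phi2_cls1 kummer_witness_mult Mmult_Mcls
        Ginv_mod_if_kummer_witness)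
qed

lemma phi3_mult:
  assumes "X \<in> Mgrp G \<sigma> n" and "Y \<in> Mgrp G \<sigma> n"
  shows "phi3 G T \<sigma> n (Mmult G \<sigma> n X Y) = mult2 G T \<sigma> (mu n) (phi3 G T \<sigma> n X) (phi3 G T \<sigma> n Y)"
proof -
  obtain a where a: "Ginv_mod G \<sigma> n a" "X = Mcls G \<sigma> n a"
    and da: "cont1 G T Kunits (root_cochain a)" "kummer_witness (root_cochain a) a"
    using assms(1) by (rule Mgrp_MclsE)
  obtain b where b: "Ginv_mod G \<sigma> n b" "Y = Mcls G \<sigma> n b"
    and db: "cont1 G T Kunits (root_cochain b)" "kummer_witness (root_cochain b) b"
    using assms(2) by (rule Mgrp_MclsE)
  let ?d = "\<lambda>g. root_cochain a g * root_cochain b g"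
  have "cont1 G T Kunits ?d"
    using da(1) db(1) locally_constant_binop[of T "root_cochain a" "root_cochain b" "(*)"]
    unfolding cont1_iff by simp
  then have "phi3 G T \<sigma> n (Mmult G \<sigma> n X Y) = cls2 G T \<sigma> (mu n) (coboundary2 ?d)"
    using a b da db by (simp add: Mmult_Mcls Ginv_mod_mult phi3_Mcls kummer_witness_mult)
  also have "\<dots> = cls2 G T \<sigma> (mu n) (\<lambda>p. coboundary2 (root_cochain a) p * coboundary2 (root_cochain b) p)"
    by (rule roots.cls2_cong) (simp add: coboundary2_mult)
  also have "\<dots> = mult2 G T \<sigma> (mu n) (phi3 G T \<sigma> n X) (phi3 G T \<sigma> n Y)"
    using a b da db by (simp add: phi3_Mcls roots.mult2_cls2 coboundary2_root_in_Z2)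
  finally show ?thesis .
qed

text \<open>If b = z e^n with z in k, twisting c by the coboundary of 1/e makes it mu_n-valued.\<close>

lemma roots_cocycle_if_kummer_rel_one:
  assumes c: "c \<in> Z1 G T \<sigma> Kunits" and b: "kummer_witness c b" and r: "kummer_rel 1 b"
  obtains c' where "c' \<in> Z1 G T \<sigma> (mu n)" and "units.cohomologous1 c c'"
proof -
  obtain z e where z: "z \<in> fixed_field G \<sigma>" "z \<noteq> 0" and e: "e \<noteq> 0" and bz: "b = 1 * z * e ^ n"
    using r by (rule kummer_relE)
  define c' where "c' g = c g * (\<sigma> g (inverse e) / inverse e)" for g
  have c'K: "c' \<in> Z1 G T \<sigma> Kunits"
    unfolding c'_def using e by (intro units.Z1_mult[OF c] units.Z1_coboundary) simp
  have "c' g \<in> mu n" if g: "g \<in> carrier G" for g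
  proof -
    have "\<sigma> g z = z" using z g unfolding fixed_field_iff by simp
    moreover have "c g ^ n = \<sigma> g b / b" using b g unfolding kummer_witness_iff by simp
    ultimately have "c' g ^ n = 1"
      unfolding c'_def using g e z(2) bz by (simp add: power_mult_distrib power_divide field_simps)
    then show ?thesis unfolding mu_iff using units.Z1_nonzero[OF c'K g] by simp
  qed
  then have "c' \<in> Z1 G T \<sigma> (mu n)" by (rule Z1_values_into[OF c'K])
  moreover have "units.cohomologous1 c c'"
    unfolding units.cohomologous1_def c'_def using e by (intro bexI[of _ "inverse e"]) simp_all
  ultimately show ?thesis by (rule that)
qed

lemma image_phi1_eq_kernel_phi2:
  "phi1 G T \<sigma> ` H1 G T \<sigma> (mu n) = {X \<in> nPic G T \<sigma> n. phi2 G T \<sigma> n X = Mcls G \<sigma> n 1}"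
proof (intro equalityI subsetI)
  fix X assume "X \<in> phi1 G T \<sigma> ` H1 G T \<sigma> (mu n)"
  then obtain X' where X': "X' \<in> H1 G T \<sigma> (mu n)" and XX': "X = phi1 G T \<sigma> X'" by blast
  define c where "c = pick X'"
  have c: "c \<in> Z1 G T \<sigma> (mu n)" and "X' = cls1 G T \<sigma> (mu n) c"
    using roots.H1_pick[OF X'] unfolding c_def by simp_all
  then have X: "X = cls1 G T \<sigma> Kunits c" using XX' phi1_cls1 by simp
  have "kummer_witness c 1"
    using roots.Z1_in_A[OF c] unfolding kummer_witness_def mu_iff by simp
  then show "X \<in> {X \<in> nPic G T \<sigma> n. phi2 G T \<sigma> n X = Mcls G \<sigma> n 1}"
    using X cls1_in_nPic[OF Z1_roots_imp_units[OF c]] phi2_cls1[OF Z1_roots_imp_units[OF c]] by simp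
next
  fix X assume "X \<in> {X \<in> nPic G T \<sigma> n. phi2 G T \<sigma> n X = Mcls G \<sigma> n 1}"
  then have XN: "X \<in> nPic G T \<sigma> n" and X1: "phi2 G T \<sigma> n X = Mcls G \<sigma> n 1" by simp_all
  obtain c b where c: "c \<in> Z1 G T \<sigma> Kunits" and X: "X = cls1 G T \<sigma> Kunits c" and b: "kummer_witness c b"
    using XN by (rule nPic_cls1E)
  have "Mcls G \<sigma> n 1 = Mcls G \<sigma> n b" using X1 phi2_cls1[OF c b] X by simp
  then have "kummer_rel 1 b"
    using Mcls_eq_iff[OF Ginv_mod_one Ginv_mod_if_kummer_witness[OF c b]] by simp
  then obtain c' where c': "c' \<in> Z1 G T \<sigma> (mu n)" and r: "units.cohomologous1 c c'"
    by (rule roots_cocycle_if_kummer_rel_one[OF c b])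
  have "X = phi1 G T \<sigma> (cls1 G T \<sigma> (mu n) c')"
    using X phi1_cls1[OF c'] units.cls1_eq[OF r] by simp
  then show "X \<in> phi1 G T \<sigma> ` H1 G T \<sigma> (mu n)" using roots.cls1_in_H1[OF c'] by blast
qed

text \<open>If 1 = \<delta>d \<delta>eps with eps mu_n-valued, then d eps is a 1-cocycle.\<close>

lemma units_cocycle_if_trivial_coboundary2:
  assumes d: "cont1 G T Kunits d" and triv: "roots.cohomologous2 (coboundary2 d) (\<lambda>_. 1)"
  obtains d' where "d' \<in> Z1 G T \<sigma> Kunits" and "\<forall>g\<in>carrier G. d' g ^ n = d g ^ n"
proof -
  obtain eps where eps: "cont1 G T (mu n) eps"
    and one: "\<forall>g\<in>carrier G. \<forall>h\<in>carrier G. 1 = coboundary2 d (g, h) * coboundary2 eps (g, h)"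
    using triv unfolding roots.cohomologous2_def by blast
  have eps_mu: "\<And>g. g \<in> carrier G \<Longrightarrow> eps g \<in> mu n" and lc_eps: "locally_constant T eps"
    using eps unfolding cont1_iff by auto
  have nz: "\<And>g. g \<in> carrier G \<Longrightarrow> d g \<noteq> 0" and lc: "locally_constant T d"
    using d unfolding cont1_iff by auto
  define d' where "d' g = d g * eps g" for g
  have nz': "d' g \<noteq> 0" if "g \<in> carrier G" for g
    unfolding d'_def using nz[OF that] eps_mu[OF that] by (simp add: mu_iff)
  have "d' \<in> Z1 G T \<sigma> Kunits"
    unfolding units.Z1_iff
  proof (intro conjI ballI)
    show "locally_constant T d'" unfolding d'_def using locally_constant_binop[OF lc lc_eps] .
    fix g assume g: "g \<in> carrier G"
    show "d' g \<in> Kunits" using nz'[OF g] by simp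
    fix h assume h: "h \<in> carrier G"
    have "coboundary2 d' (g, h) = 1" unfolding d'_def using coboundary2_mult[OF g h, of d eps] one g h by simp
    then show "d' (g \<otimes> h) = d' g * \<sigma> g (d' h)"
      unfolding coboundary2_apply using nz'[of "g \<otimes> h"] g h by (simp add: field_simps)
  qed
  moreover have "\<forall>g\<in>carrier G. d' g ^ n = d g ^ n"
    unfolding d'_def using eps_mu by (simp add: mu_iff power_mult_distrib)
  ultimately show ?thesis by (rule that)
qed

lemma image_phi2_eq_kernel_phi3:
  "phi2 G T \<sigma> n ` nPic G T \<sigma> n = {Y \<in> Mgrp G \<sigma> n. phi3 G T \<sigma> n Y = cls2 G T \<sigma> (mu n) (\<lambda>_. 1)}"
proof (intro equalityI subsetI)
  fix Y assume "Y \<in> phi2 G T \<sigma> n ` nPic G T \<sigma> n"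
  then obtain X where X: "X \<in> nPic G T \<sigma> n" and Y: "Y = phi2 G T \<sigma> n X" by blast
  obtain c b where c: "c \<in> Z1 G T \<sigma> Kunits" and "X = cls1 G T \<sigma> Kunits c" and b: "kummer_witness c b"
    using X by (rule nPic_cls1E)
  then have Yb: "Y = Mcls G \<sigma> n b" using Y phi2_cls1 by simp
  have "cont1 G T Kunits c" using c unfolding Z1_def by simp
  then have "phi3 G T \<sigma> n Y = cls2 G T \<sigma> (mu n) (coboundary2 c)"
    unfolding Yb by (rule phi3_Mcls[OF Ginv_mod_if_kummer_witness[OF c b] _ b])
  also have "\<dots> = cls2 G T \<sigma> (mu n) (\<lambda>_. 1)"
    by (rule roots.cls2_cong) (simp add: units.coboundary2_of_cocycle[OF c])
  finally show "Y \<in> {Y \<in> Mgrp G \<sigma> n. phi3 G T \<sigma> n Y = cls2 G T \<sigma> (mu n) (\<lambda>_. 1)}"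
    using phi2_in_Mgrp[OF X] Y by simp
next
  fix Y assume "Y \<in> {Y \<in> Mgrp G \<sigma> n. phi3 G T \<sigma> n Y = cls2 G T \<sigma> (mu n) (\<lambda>_. 1)}"
  then have YM: "Y \<in> Mgrp G \<sigma> n" and Y1: "phi3 G T \<sigma> n Y = cls2 G T \<sigma> (mu n) (\<lambda>_. 1)" by simp_all
  obtain a where a: "Ginv_mod G \<sigma> n a" and Y: "Y = Mcls G \<sigma> n a"
    and d: "cont1 G T Kunits (root_cochain a)" and w: "kummer_witness (root_cochain a) a"
    using YM by (rule Mgrp_MclsE)
  have "cls2 G T \<sigma> (mu n) (coboundary2 (root_cochain a)) = cls2 G T \<sigma> (mu n) (\<lambda>_. 1)"
    using Y1 phi3_Mcls[OF a d w] Y by simp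
  then have "roots.cohomologous2 (coboundary2 (root_cochain a)) (\<lambda>_. 1)"
    using roots.cls2_eq_iff[OF roots.Z2_one] by simp
  then obtain d' where d': "d' \<in> Z1 G T \<sigma> Kunits" and pow: "\<forall>g\<in>carrier G. d' g ^ n = root_cochain a g ^ n"
    by (rule units_cocycle_if_trivial_coboundary2[OF d])
  have w': "kummer_witness d' a" using w pow unfolding kummer_witness_def by simp
  then have "Y = phi2 G T \<sigma> n (cls1 G T \<sigma> Kunits d')" using Y phi2_cls1[OF d'] by simp
  then show "Y \<in> phi2 G T \<sigma> n ` nPic G T \<sigma> n" using cls1_in_nPic[OF d' w'] by blast
qed

end

section \<open>Invertible objects inside Kummer extensions\<close>

context smooth_field
begin

lemma map_poly_sigma_add: "g \<in> carrier G \<Longrightarrow> map_poly (\<sigma> g) (p + q) = map_poly (\<sigma> g) p + map_poly (\<sigma> g) q"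
  by (intro poly_eqI) (simp add: coeff_map_poly)

lemma map_poly_sigma_mult: "g \<in> carrier G \<Longrightarrow> map_poly (\<sigma> g) (p * q) = map_poly (\<sigma> g) p * map_poly (\<sigma> g) q"
  by (intro poly_eqI) (simp add: coeff_map_poly coeff_mult sigma_sum)

lemma map_poly_sigma_pCons: "g \<in> carrier G \<Longrightarrow> map_poly (\<sigma> g) (pCons a p) = pCons (\<sigma> g a) (map_poly (\<sigma> g) p)"
  by (simp add: map_poly_pCons)

lemma map_poly_sigma_pcompose:
  "g \<in> carrier G \<Longrightarrow> map_poly (\<sigma> g) (pcompose p r) = pcompose (map_poly (\<sigma> g) p) (map_poly (\<sigma> g) r)"
  by (induction p rule: pCons_induct)
     (simp_all add: pcompose_pCons map_poly_sigma_add map_poly_sigma_mult map_poly_sigma_pCons)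

lemma map_poly_sigma_comp:
  "g \<in> carrier G \<Longrightarrow> h \<in> carrier G \<Longrightarrow> map_poly (\<sigma> g) (map_poly (\<sigma> h) p) = map_poly (\<sigma> (g \<otimes> h)) p"
  by (intro poly_eqI) (simp add: coeff_map_poly sigma_comp)

lemma map_poly_sigma_one: "map_poly (\<sigma> \<one>) p = p"
  by (intro poly_eqI) (simp add: coeff_map_poly)

lemma locally_constant_map_poly_sigma: "locally_constant T (\<lambda>g. map_poly (\<sigma> g) p)"
  unfolding map_poly_def
  using locally_constant_comp[OF locally_constant_map[where xs = "coeffs p", OF locally_constant_sigma], of Poly] .

end

locale twisted_action = smooth_field +
  fixes c
  assumes cocycle: "c \<in> Z1 G T \<sigma> Kunits"
begin

lemma c_nonzero: "g \<in> carrier G \<Longrightarrow> c g \<noteq> 0"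
  using units.Z1_nonzero[OF cocycle] .

lemma c_mult: "g \<in> carrier G \<Longrightarrow> h \<in> carrier G \<Longrightarrow> c (g \<otimes> h) = c g * \<sigma> g (c h)"
  using units.Z1_cocycle[OF cocycle] .

lemma c_one: "c \<one> = 1"
  using c_mult[of \<one> \<one>] c_nonzero[of \<one>] by simp

definition twist where
  "twist g p = pcompose (map_poly (\<sigma> g) p) [:0, c g:]"

lemma twist_add: "g \<in> carrier G \<Longrightarrow> twist g (p + q) = twist g p + twist g q"
  unfolding twist_def by (simp add: map_poly_sigma_add pcompose_add)

lemma twist_mult: "g \<in> carrier G \<Longrightarrow> twist g (p * q) = twist g p * twist g q"
  unfolding twist_def by (simp add: map_poly_sigma_mult pcompose_mult)

lemma twist_const: "g \<in> carrier G \<Longrightarrow> twist g [:x:] = [:\<sigma> g x:]"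
  unfolding twist_def by (simp add: map_poly_pCons)

lemma twist_0: "twist g 0 = 0"
  unfolding twist_def by simp

lemma twist_diff: "g \<in> carrier G \<Longrightarrow> twist g (p - q) = twist g p - twist g q"
  using twist_add[of g "p - q" q] by simp

lemma twist_X: "g \<in> carrier G \<Longrightarrow> twist g [:0, 1:] = [:0, c g:]"
  unfolding twist_def by (simp add: map_poly_sigma_pCons pcompose_pCons)

lemma twist_smult: "g \<in> carrier G \<Longrightarrow> twist g (smult a p) = smult (\<sigma> g a) (twist g p)"
  using twist_mult[of g "[:a:]" p] twist_const[of g a] by simp

lemma twist_1: "g \<in> carrier G \<Longrightarrow> twist g 1 = 1"
  using twist_const[of g 1] by (simp add: one_pCons)

lemma twist_power: "g \<in> carrier G \<Longrightarrow> twist g (p ^ k) = twist g p ^ k"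
  by (induction k) (simp_all add: twist_mult twist_1)

lemma twist_comp: "g \<in> carrier G \<Longrightarrow> h \<in> carrier G \<Longrightarrow> twist g (twist h p) = twist (g \<otimes> h) p"
proof -
  assume g: "g \<in> carrier G" and h: "h \<in> carrier G"
  have "twist g (twist h p) =
      pcompose (pcompose (map_poly (\<sigma> g) (map_poly (\<sigma> h) p)) [:0, \<sigma> g (c h):]) [:0, c g:]"
    unfolding twist_def using g by (simp add: map_poly_sigma_pcompose map_poly_sigma_pCons)
  also have "\<dots> = pcompose (map_poly (\<sigma> (g \<otimes> h)) p) (pcompose [:0, \<sigma> g (c h):] [:0, c g:])"
    using g h by (simp add: map_poly_sigma_comp pcompose_assoc)
  also have "pcompose [:0, \<sigma> g (c h):] [:0, c g:] = [:0, c (g \<otimes> h):]"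
    using g h by (simp add: pcompose_pCons c_mult mult.commute)
  finally show ?thesis unfolding twist_def .
qed

lemma twist_one: "twist \<one> p = p"
  unfolding twist_def by (simp add: map_poly_sigma_one c_one)

lemma twist_inv_cancel: "g \<in> carrier G \<Longrightarrow> twist (inv g) (twist g p) = p" "g \<in> carrier G \<Longrightarrow> twist g (twist (inv g) p) = p"
  by (simp_all add: twist_comp twist_one)

lemma twist_eq_0_iff: "g \<in> carrier G \<Longrightarrow> twist g p = 0 \<longleftrightarrow> p = 0"
  using twist_inv_cancel(1)[of g p] by (auto simp: twist_0)

lemma twist_dvd: "g \<in> carrier G \<Longrightarrow> a dvd b \<Longrightarrow> twist g a dvd twist g b"
  by (elim dvdE) (simp add: twist_mult)

lemma twist_X_power: "g \<in> carrier G \<Longrightarrow> twist g ([:0, 1:] ^ k) = smult (c g ^ k) ([:0, 1:] ^ k)"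
  by (simp add: twist_power twist_X smult_power[symmetric])

lemma locally_constant_twist: "locally_constant T (\<lambda>g. twist g p)"
  unfolding twist_def
  using locally_constant_binop[OF locally_constant_map_poly_sigma[of p] units.Z1_locally_constant[OF cocycle],
      of "\<lambda>r x. pcompose r [:0, x:]"] .

lemma is_unit_twist_iff: "g \<in> carrier G \<Longrightarrow> is_unit (twist g p) \<longleftrightarrow> is_unit p"
  using twist_dvd[of g p 1] twist_dvd[of "inv g" "twist g p" 1] by (auto simp: twist_inv_cancel twist_1)

lemma irreducible_twist:
  assumes g: "g \<in> carrier G" and q: "irreducible q"
  shows "irreducible (twist g q)"
proof (rule irreducibleI)
  show "twist g q \<noteq> 0" using q g by (auto simp: twist_eq_0_iff)
  show "\<not> is_unit (twist g q)" using irreducible_not_unit[OF q] g by (simp add: is_unit_twist_iff)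
  fix a b assume "twist g q = a * b"
  then have "q = twist (inv g) a * twist (inv g) b" using g by (metis twist_inv_cancel(1) twist_mult inv_closed)
  with q have "is_unit (twist (inv g) a) \<or> is_unit (twist (inv g) b)" by (rule irreducibleD)
  then show "is_unit a \<or> is_unit b" using g by (simp add: is_unit_twist_iff)
qed

definition monic_twist where
  "monic_twist g p = make_monic (twist g p)"

lemma monic_twist_comp:
  assumes g: "g \<in> carrier G" and h: "h \<in> carrier G" and q: "q \<noteq> 0"
  shows "monic_twist (g \<otimes> h) q = monic_twist g (monic_twist h q)"
proof -
  let ?l = "lead_coeff (twist h q)"
  have l: "?l \<noteq> 0" using q h by (simp add: twist_eq_0_iff)
  have "twist (g \<otimes> h) q = twist g (smult ?l (monic_twist h q))"
    unfolding monic_twist_def smult_lead_coeff_make_monic using g h by (simp add: twist_comp)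
  also have "\<dots> = smult (\<sigma> g ?l) (twist g (monic_twist h q))" using g by (rule twist_smult)
  finally show ?thesis unfolding monic_twist_def using l g by (simp add: make_monic_smult)
qed

lemma monic_twist_one: "lead_coeff q = 1 \<Longrightarrow> monic_twist \<one> q = q"
  unfolding monic_twist_def by (simp add: twist_one make_monic_monic)

lemma locally_constant_monic_twist: "locally_constant T (\<lambda>g. monic_twist g q)"
  unfolding monic_twist_def by (rule locally_constant_comp[OF locally_constant_twist])

end

locale kummer_polynomial = kummer + twisted_action +
  fixes b
  assumes n_pos: "0 < n" and witness: "kummer_witness c b"
begin

definition kummer_poly where
  "kummer_poly = [:0, 1:] ^ n - [:b:]"

lemma degree_kummer_poly: "degree kummer_poly = n"
proof -
  have "coeff kummer_poly i = (if i = n then 1 else 0) - (if i = 0 then b else 0)" for i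
    unfolding kummer_poly_def by (simp add: monom_altdef[of 1, simplified, symmetric] coeff_pCons split: nat.split)
  then show ?thesis using n_pos by (intro antisym degree_le le_degree) auto
qed

lemma kummer_poly_nonzero: "kummer_poly \<noteq> 0"
  using degree_kummer_poly n_pos by auto

lemma twist_kummer_poly: "g \<in> carrier G \<Longrightarrow> twist g kummer_poly = smult (c g ^ n) kummer_poly"
  using witness unfolding kummer_poly_def kummer_witness_def
  by (simp add: twist_diff twist_X_power twist_const smult_diff_right mult.commute)

lemma monic_twist_factor:
  assumes g: "g \<in> carrier G" and q: "q \<in> monic_irreducible_factors kummer_poly"
  shows "monic_twist g q \<in> monic_irreducible_factors kummer_poly"
proof -
  have q: "irreducible q" "q dvd kummer_poly" using q unfolding monic_irreducible_factors_def by simp_all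
  have irr: "irreducible (twist g q)" by (rule irreducible_twist[OF g q(1)])
  then have nz: "twist g q \<noteq> 0" by auto
  have "twist g q dvd smult (c g ^ n) kummer_poly" using twist_dvd[OF g q(2)] g by (simp add: twist_kummer_poly)
  then have "twist g q dvd kummer_poly" using c_nonzero[OF g] by (simp add: dvd_smult_iff)
  then show ?thesis
    unfolding monic_irreducible_factors_def monic_twist_def
    using irr nz by (simp add: irreducible_make_monic lead_coeff_make_monic make_monic_dvd_iff)
qed

text \<open>The twisted action permutes the finitely many monic irreducible factors of X^n - b, so the
  stabiliser of one of them is an open subgroup of finite index.\<close>

lemma factor_twist_stable:
  assumes no_subgroups: "\<forall>H. subgroup H G \<and> openin T H \<and> finite (rcosets H) \<longrightarrow> H = carrier G"
    and q: "q \<in> monic_irreducible_factors kummer_poly" and g: "g \<in> carrier G"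
  shows "q dvd twist g q"
proof -
  let ?H = "{g \<in> carrier G. monic_twist g q = q}"
  have factors_nonzero: "\<And>p. p \<in> monic_irreducible_factors kummer_poly \<Longrightarrow> p \<noteq> 0"
    unfolding monic_irreducible_factors_def by auto
  have "subgroup ?H G \<and> finite (rcosets ?H)"
    using stabilizer_of_finite_orbit[of "monic_irreducible_factors kummer_poly" monic_twist q]
      monic_twist_factor monic_twist_one monic_twist_comp factors_nonzero
      finite_monic_irreducible_factors[OF kummer_poly_nonzero] q
    unfolding monic_irreducible_factors_def by auto
  moreover have "openin T ?H"
    using locally_constant_monic_twist[of q] unfolding locally_constant_def topspace_T by blast
  ultimately have "?H = carrier G" using no_subgroups by blast
  then have "make_monic (twist g q) = q" using g unfolding monic_twist_def by blast
  then have "twist g q = smult (lead_coeff (twist g q)) q" using smult_lead_coeff_make_monic by metis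
  then show ?thesis by (metis dvd_smult dvd_refl)
qed

end

locale stable_factor = kummer_polynomial +
  fixes q
  assumes factor: "q \<in> monic_irreducible_factors kummer_poly"
    and stable: "\<And>g. g \<in> carrier G \<Longrightarrow> q dvd twist g q"
begin

lemma irreducible_factor: "irreducible q" and factor_dvd: "q dvd kummer_poly"
  using factor unfolding monic_irreducible_factors_def by simp_all

lemma factor_nonzero: "q \<noteq> 0"
  using irreducible_factor by auto

lemma twist_mod: "g \<in> carrier G \<Longrightarrow> twist g (p mod q) mod q = twist g p mod q"
proof -
  assume g: "g \<in> carrier G"
  have "twist g p - twist g (p mod q) = twist g q * twist g (p div q)"
    using g by (simp add: twist_diff[symmetric] twist_mult[symmetric] minus_mod_eq_mult_div)
  then have "q dvd twist g p - twist g (p mod q)" using stable[OF g] by simp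
  then show ?thesis by (simp add: mod_eq_dvd_iff dvd_diff_commute)
qed

definition galois_action where
  "galois_action g x = residue q (twist g (Poly x))"

lemma galois_action_residue: "g \<in> carrier G \<Longrightarrow> galois_action g (residue q p) = residue q (twist g p)"
  unfolding galois_action_def by (simp add: residue_eq_iff twist_mod)

lemma galois_action_bij:
  assumes g: "g \<in> carrier G"
  shows "bij_betw (galois_action g) (carrier (residue_ring q)) (carrier (residue_ring q))"
proof (rule bij_betw_byWitness[where f' = "galois_action (inv g)"])
  show "\<forall>x\<in>carrier (residue_ring q). galois_action (inv g) (galois_action g x) = x"
    "\<forall>x\<in>carrier (residue_ring q). galois_action g (galois_action (inv g) x) = x"
    using g by (auto elim!: residue_ringE simp: galois_action_residue twist_inv_cancel)
qed (auto simp: galois_action_def)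

lemma galois_action_add:
  "g \<in> carrier G \<Longrightarrow> x \<in> carrier (residue_ring q) \<Longrightarrow> y \<in> carrier (residue_ring q) \<Longrightarrow>
   galois_action g (x \<oplus>\<^bsub>residue_ring q\<^esub> y) = galois_action g x \<oplus>\<^bsub>residue_ring q\<^esub> galois_action g y"
  by (auto elim!: residue_ringE simp: galois_action_residue twist_add)

lemma galois_action_mult:
  "g \<in> carrier G \<Longrightarrow> x \<in> carrier (residue_ring q) \<Longrightarrow> y \<in> carrier (residue_ring q) \<Longrightarrow>
   galois_action g (x \<otimes>\<^bsub>residue_ring q\<^esub> y) = galois_action g x \<otimes>\<^bsub>residue_ring q\<^esub> galois_action g y"
  by (auto elim!: residue_ringE simp: galois_action_residue twist_mult)

lemma galois_action_one: "x \<in> carrier (residue_ring q) \<Longrightarrow> galois_action \<one> x = x"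
  by (auto elim!: residue_ringE simp: galois_action_residue twist_one)

lemma galois_action_comp:
  "g \<in> carrier G \<Longrightarrow> h \<in> carrier G \<Longrightarrow> x \<in> carrier (residue_ring q) \<Longrightarrow>
   galois_action (g \<otimes> h) x = galois_action g (galois_action h x)"
  by (auto elim!: residue_ringE simp: galois_action_residue twist_comp)

lemma galois_action_stabilizer_open: "openin T {g \<in> carrier G. galois_action g x = x}"
  using locally_constant_comp[OF locally_constant_twist, of "residue q" "Poly x"]
  unfolding galois_action_def locally_constant_def topspace_T by blast

lemma residue_X_power: "residue q [:0, 1:] [^]\<^bsub>residue_ring q\<^esub> n = residue q [:b:]"
  using factor_dvd unfolding kummer_poly_def by (simp add: residue_pow residue_eq_iff mod_eq_dvd_iff)

lemma residue_span:
  assumes "x \<in> carrier (residue_ring q)"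
  shows "\<exists>a. x = (\<Oplus>\<^bsub>residue_ring q\<^esub>i\<in>{..<n}. residue q [:a i:] \<otimes>\<^bsub>residue_ring q\<^esub> residue q [:0, 1:] [^]\<^bsub>residue_ring q\<^esub> i)"
proof -
  obtain p where p: "x = residue q p" using assms by (rule residue_ringE)
  let ?r = "p mod q"
  have "degree q \<le> n" using dvd_imp_degree_le[OF factor_dvd kummer_poly_nonzero] degree_kummer_poly by simp
  then have deg: "degree ?r \<le> n - 1"
    using degree_mod_less'[OF factor_nonzero, of p] by (cases "?r = 0") auto
  have "(\<Sum>i<n. monom (coeff ?r i) i) = (\<Sum>i\<le>n - 1. monom (coeff ?r i) i)"
    using n_pos by (intro sum.cong) auto
  also have "\<dots> = ?r" by (rule poly_as_sum_of_monoms'[OF deg])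
  finally have "(\<Oplus>\<^bsub>residue_ring q\<^esub>i\<in>{..<n}. residue q [:coeff ?r i:] \<otimes>\<^bsub>residue_ring q\<^esub> residue q [:0, 1:] [^]\<^bsub>residue_ring q\<^esub> i) = x"
    unfolding p by (simp add: residue_pow monom_altdef residue_finsum residue_eq_iff)
  then show ?thesis by metis
qed

lemma not_dvd_X: "\<not> q dvd [:0, 1:]"
proof
  assume "q dvd [:0, 1:]"
  then have "q dvd [:0, 1:] ^ n" using n_pos by (metis dvd_power dvd_trans)
  then have "q dvd [:0, 1:] ^ n - kummer_poly" using factor_dvd by (rule dvd_diff)
  then have "q dvd [:b:]" unfolding kummer_poly_def by simp
  moreover have "b \<noteq> 0" using witness unfolding kummer_witness_def by simp
  ultimately have "degree q = 0" using dvd_imp_degree_le[of q "[:b:]"] by simp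
  then show False using irreducible_factor irreducible_not_unit is_unit_iff_degree[OF factor_nonzero] by blast
qed

lemma residue_linear_inj:
  assumes "residue q [:0, a:] = residue q [:0, a':]"
  shows "a = a'"
proof (rule ccontr)
  assume "a \<noteq> a'"
  moreover have "q dvd smult (a - a') [:0, 1:]"
    using assms unfolding residue_eq_iff mod_eq_dvd_iff by simp
  ultimately have "q dvd [:0, 1:]" using dvd_smult_cancel[of q "a - a'" "[:0, 1:]"] by simp
  then show False using not_dvd_X by blast
qed

lemma galois_action_residue_linear:
  assumes g: "g \<in> carrier G"
  shows "galois_action g (residue q [:0, a:]) = residue q [:0, \<sigma> g a * c g:]"
proof -
  have "twist g (smult a [:0, 1:]) = smult (\<sigma> g a) [:0, c g:]"
    by (simp only: twist_smult[OF g] twist_X[OF g])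
  then show ?thesis using g by (simp add: galois_action_residue)
qed

lemma contained_in_root_ext_if_embedding:
  assumes inj: "inj j" and j_carrier: "\<And>m. j m \<in> carrier (residue_ring q)"
    and j_add: "\<And>m m'. j (m + m') = j m \<oplus>\<^bsub>residue_ring q\<^esub> j m'"
    and j_scalar: "\<And>a m. j (sc a m) = residue q [:a:] \<otimes>\<^bsub>residue_ring q\<^esub> j m"
    and j_equivariant: "\<And>g m. g \<in> carrier G \<Longrightarrow> j (\<rho> g m) = galois_action g (j m)"
  shows "contained_in_root_ext G T \<sigma> n b sc \<rho>"
  unfolding contained_in_root_ext_def
proof (rule exI[of _ "residue_ring q"], rule exI[of _ "\<lambda>x. residue q [:x:]"], rule exI[of _ "residue q [:0, 1:]"],
    rule exI[of _ galois_action], rule exI[of _ j], intro conjI allI ballI)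
  show "field (residue_ring q)" by (rule field_residue_ring[OF irreducible_factor])
  show "residue q [:1:] = \<one>\<^bsub>residue_ring q\<^esub>" by (simp add: residue_ring_one one_pCons)
  show "residue q [:0, 1:] [^]\<^bsub>residue_ring q\<^esub> n = residue q [:b:]" by (rule residue_X_power)
  fix x y
  show "residue q [:x + y:] = residue q [:x:] \<oplus>\<^bsub>residue_ring q\<^esub> residue q [:y:]" by simp
  show "residue q [:x * y:] = residue q [:x:] \<otimes>\<^bsub>residue_ring q\<^esub> residue q [:y:]" by (simp add: mult.commute)
next
  fix g x assume "g \<in> carrier G"
  then show "galois_action g (residue q [:x:]) = residue q [:\<sigma> g x:]"
    by (simp add: galois_action_residue twist_const)
qed (simp_all add: residue_span galois_action_bij galois_action_add galois_action_mult galois_action_one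
      galois_action_comp galois_action_stabilizer_open inj j_carrier j_add j_scalar j_equivariant)

end

locale invertible_module = smooth_field +
  fixes sc and \<rho>
  assumes invertible: "invertible_obj G T \<sigma> sc \<rho>"
begin

lemma
  shows sc_add_left: "sc (a + a') m = sc a m + sc a' m"
    and sc_add_right: "sc a (m + m') = sc a m + sc a m'"
    and sc_mult: "sc (a * a') m = sc a (sc a' m)"
    and sc_one: "sc 1 m = m"
    and rank_one: "\<exists>v. v \<noteq> 0 \<and> (\<forall>m. \<exists>a. m = sc a v)"
    and rho_sc: "g \<in> carrier G \<Longrightarrow> \<rho> g (sc a m) = sc (\<sigma> g a) (\<rho> g m)"
    and rho_one: "\<rho> \<one> m = m"
    and rho_comp: "g \<in> carrier G \<Longrightarrow> h \<in> carrier G \<Longrightarrow> \<rho> (g \<otimes> h) m = \<rho> g (\<rho> h m)"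
    and rho_stabilizer_open: "openin T {g \<in> carrier G. \<rho> g m = m}"
  using invertible unfolding invertible_obj_def by auto

definition basis where "basis = (SOME v. v \<noteq> 0 \<and> (\<forall>m. \<exists>a. m = sc a v))"

definition coord where "coord m = (SOME a. m = sc a basis)"

definition cocycle where "cocycle g = coord (\<rho> g basis)"

lemma basis: "basis \<noteq> 0" "\<exists>a. m = sc a basis"
  using someI_ex[OF rank_one] unfolding basis_def by blast+

lemma sc_coord: "sc (coord m) basis = m"
  unfolding coord_def using someI_ex[OF basis(2)] by simp

lemma sc_zero: "sc 0 m = 0"
  using sc_add_left[of 0 0 m] by simp

lemma sc_zero_right: "sc a 0 = 0"
  using sc_add_right[of a 0 0] by simp

lemma sc_basis_inj: "sc a basis = sc a' basis \<Longrightarrow> a = a'"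
proof (rule ccontr)
  assume eq: "sc a basis = sc a' basis" and ne: "a \<noteq> a'"
  have "sc (a - a') basis = 0" using eq sc_add_left[of "a - a'" a' basis] by simp
  then have "sc (inverse (a - a')) (sc (a - a') basis) = 0" by (simp add: sc_zero_right)
  then have "basis = 0" using ne by (simp add: sc_mult[symmetric] sc_one)
  then show False using basis(1) by simp
qed

lemma coord_eqI:
  assumes "m = sc a basis"
  shows "coord m = a"
  by (rule sc_basis_inj) (simp add: sc_coord assms[symmetric])

lemma coord_add: "coord (m + m') = coord m + coord m'"
  by (rule coord_eqI) (simp add: sc_add_left sc_coord)

lemma coord_sc: "coord (sc a m) = a * coord m"
  by (rule coord_eqI) (simp add: sc_mult sc_coord)

lemma coord_rho:
  assumes g: "g \<in> carrier G"
  shows "coord (\<rho> g m) = \<sigma> g (coord m) * cocycle g"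
proof (rule coord_eqI)
  have "\<rho> g m = \<rho> g (sc (coord m) basis)" by (simp add: sc_coord)
  also have "\<dots> = sc (\<sigma> g (coord m)) (\<rho> g basis)" using g by (rule rho_sc)
  also have "\<dots> = sc (\<sigma> g (coord m)) (sc (cocycle g) basis)" unfolding cocycle_def sc_coord ..
  finally show "\<rho> g m = sc (\<sigma> g (coord m) * cocycle g) basis" by (simp add: sc_mult)
qed

lemma coord_inj:
  assumes "coord m = coord m'"
  shows "m = m'"
proof -
  have "m = sc (coord m) basis" by (rule sc_coord[symmetric])
  also have "\<dots> = m'" unfolding assms by (rule sc_coord)
  finally show ?thesis .
qed

lemma cocycle_in_Z1: "cocycle \<in> Z1 G T \<sigma> Kunits"
  unfolding units.Z1_iff
proof (intro conjI ballI)
  fix g assume g: "g \<in> carrier G"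
  have rho_zero: "\<rho> g 0 = 0" if "g \<in> carrier G" for g
    using rho_sc[OF that, of 0 0] that by (simp add: sc_zero)
  have "\<rho> (inv g) (\<rho> g basis) = basis" using g by (simp add: rho_comp[symmetric] rho_one)
  moreover have "\<rho> g basis = sc (cocycle g) basis" unfolding cocycle_def by (rule sc_coord[symmetric])
  ultimately have "\<rho> (inv g) (sc (cocycle g) basis) = basis" by simp
  then have "cocycle g \<noteq> 0" using g rho_zero[of "inv g"] basis(1) by (auto simp: sc_zero)
  then show "cocycle g \<in> Kunits" by simp
  fix h assume h: "h \<in> carrier G"
  have "cocycle (g \<otimes> h) = coord (\<rho> g (\<rho> h basis))" unfolding cocycle_def using g h by (simp add: rho_comp)
  also have "\<dots> = \<sigma> g (cocycle h) * cocycle g"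
    using coord_rho[OF g, of "\<rho> h basis"] by (simp only: cocycle_def)
  finally show "cocycle (g \<otimes> h) = cocycle g * \<sigma> g (cocycle h)" by (simp add: mult.commute)
next
  show "locally_constant T cocycle"
    unfolding cocycle_def
    by (rule locally_constant_comp[OF locally_constant_orbit_map[OF rho_comp rho_one rho_stabilizer_open]])
qed

lemma pic_class_eq: "pic_class G T \<sigma> sc \<rho> = cls1 G T \<sigma> Kunits cocycle"
  unfolding pic_class_def Let_def basis_def[symmetric] cocycle_def[abs_def] coord_def by simp

text \<open>The basis vector is sent to the class of X in K[X]/(q), for a monic irreducible factor q of
  X^n - b stable under the twisted action.\<close>

lemma contained_in_root_ext:
  assumes no_subgroups: "\<forall>H. subgroup H G \<and> openin T H \<and> finite (rcosets H) \<longrightarrow> H = carrier G"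
    and n: "0 < n" and order: "pic_pow G T \<sigma> (pic_class G T \<sigma> sc \<rho>) n = pic_one G T \<sigma>"
  shows "\<exists>a. Ginv_mod G \<sigma> n a \<and> contained_in_root_ext G T \<sigma> n a sc \<rho>"
proof -
  interpret kummer G T \<sigma> n by unfold_locales
  let ?X = "cls1 G T \<sigma> Kunits cocycle"
  have "?X \<in> nPic G T \<sigma> n"
    using order units.cls1_in_H1[OF cocycle_in_Z1] unfolding nPic_def Pic_def pic_class_eq by simp
  then obtain b0 where "kummer_witness (pick ?X) b0" unfolding nPic_iff by blast
  moreover have "units.cohomologous1 (pick ?X) cocycle"
    using units.pick_cls1[OF cocycle_in_Z1] units.cohomologous1_sym by blast
  ultimately obtain b where b: "kummer_witness cocycle b" using kummer_witness_cohomologous by blast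
  interpret P: kummer_polynomial G T \<sigma> n cocycle b
    by unfold_locales (simp_all add: cocycle_in_Z1 n b)
  obtain q where q: "q \<in> monic_irreducible_factors P.kummer_poly"
    using monic_irreducible_factor_exists P.degree_kummer_poly n by metis
  interpret F: stable_factor G T \<sigma> n cocycle b q
    by unfold_locales (simp_all add: q P.factor_twist_stable[OF no_subgroups q])
  define j where "j m = residue q [:0, coord m:]" for m
  have "contained_in_root_ext G T \<sigma> n b sc \<rho>"
  proof (rule F.contained_in_root_ext_if_embedding)
    show "inj j" using F.residue_linear_inj coord_inj unfolding j_def inj_def by blast
    fix m m' a g
    show "j m \<in> carrier (residue_ring q)" unfolding j_def by simp
    show "j (m + m') = j m \<oplus>\<^bsub>residue_ring q\<^esub> j m'" unfolding j_def by (simp add: coord_add)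
    show "j (sc a m) = residue q [:a:] \<otimes>\<^bsub>residue_ring q\<^esub> j m" unfolding j_def by (simp add: coord_sc mult.commute)
    assume g: "g \<in> carrier G"
    show "j (\<rho> g m) = F.galois_action g (j m)"
      unfolding j_def using g by (simp add: F.galois_action_residue_linear coord_rho)
  qed
  then show ?thesis using Ginv_mod_if_kummer_witness[OF cocycle_in_Z1 b] by blast
qed

end

theorem proposition5p21:
  fixes G :: "'g monoid" and T :: "'g topology" and \<sigma> :: "'g \<Rightarrow> 'k::field \<Rightarrow> 'k" and n :: nat
  assumes "perm_group G T" and "smooth_G_field G T \<sigma>" and "n > 0"
  shows
    "phi1 G T \<sigma> ` H1 G T \<sigma> (mu n) \<subseteq> nPic G T \<sigma> n \<and>
     phi2 G T \<sigma> n ` nPic G T \<sigma> n \<subseteq> Mgrp G \<sigma> n \<and>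
     phi3 G T \<sigma> n ` Mgrp G \<sigma> n \<subseteq> H2 G T \<sigma> (mu n) \<and>
     (\<forall>X\<in>H1 G T \<sigma> (mu n). \<forall>Y\<in>H1 G T \<sigma> (mu n).
        phi1 G T \<sigma> (mult1 G T \<sigma> (mu n) X Y) = mult1 G T \<sigma> Kunits (phi1 G T \<sigma> X) (phi1 G T \<sigma> Y)) \<and>
     (\<forall>X\<in>nPic G T \<sigma> n. \<forall>Y\<in>nPic G T \<sigma> n.
        phi2 G T \<sigma> n (mult1 G T \<sigma> Kunits X Y) = Mmult G \<sigma> n (phi2 G T \<sigma> n X) (phi2 G T \<sigma> n Y)) \<and>
     (\<forall>X\<in>Mgrp G \<sigma> n. \<forall>Y\<in>Mgrp G \<sigma> n.
        phi3 G T \<sigma> n (Mmult G \<sigma> n X Y) = mult2 G T \<sigma> (mu n) (phi3 G T \<sigma> n X) (phi3 G T \<sigma> n Y)) \<and>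
     phi1 G T \<sigma> ` H1 G T \<sigma> (mu n) = {X \<in> nPic G T \<sigma> n. phi2 G T \<sigma> n X = Mcls G \<sigma> n 1} \<and>
     phi2 G T \<sigma> n ` nPic G T \<sigma> n = {Y \<in> Mgrp G \<sigma> n. phi3 G T \<sigma> n Y = cls2 G T \<sigma> (mu n) (\<lambda>_. 1)} \<and>
     ((\<forall>H. subgroup H G \<and> openin T H \<and> finite (rcosets\<^bsub>G\<^esub> H) \<longrightarrow> H = carrier G) \<longrightarrow>
        (\<forall>(sc :: 'k \<Rightarrow> 'm::ab_group_add \<Rightarrow> 'm) \<rho>.
           invertible_obj G T \<sigma> sc \<rho> \<and>
           pic_pow G T \<sigma> (pic_class G T \<sigma> sc \<rho>) n = pic_one G T \<sigma> \<and>
           (\<forall>k. 0 < k \<and> k < n \<longrightarrow> pic_pow G T \<sigma> (pic_class G T \<sigma> sc \<rho>) k \<noteq> pic_one G T \<sigma>) \<longrightarrow>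
           (\<exists>a. Ginv_mod G \<sigma> n a \<and> contained_in_root_ext G T \<sigma> n a sc \<rho>)))"
proof -
  interpret kummer G T \<sigma> n using assms(1,2) by unfold_locales
  have contained: "\<exists>a. Ginv_mod G \<sigma> n a \<and> contained_in_root_ext G T \<sigma> n a sc \<rho>"
    if "\<forall>H. subgroup H G \<and> openin T H \<and> finite (rcosets\<^bsub>G\<^esub> H) \<longrightarrow> H = carrier G"
      and "invertible_obj G T \<sigma> sc \<rho>" and "pic_pow G T \<sigma> (pic_class G T \<sigma> sc \<rho>) n = pic_one G T \<sigma>"
    for sc :: "'k \<Rightarrow> 'm::ab_group_add \<Rightarrow> 'm" and \<rho>
  proof -
    interpret invertible_module G T \<sigma> sc \<rho> using that(2) by unfold_locales
    show ?thesis using that(1) assms(3) that(3) by (rule contained_in_root_ext)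
  qed
  show ?thesis
    by (intro conjI image_subsetI ballI impI allI)
       (simp_all add: phi1_in_nPic phi2_in_Mgrp phi3_in_H2 phi1_mult phi2_mult phi3_mult
         image_phi1_eq_kernel_phi2 image_phi2_eq_kernel_phi3 contained)
qed

end
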